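(* Under the hypotheses below, for all $\beta\ge1$, \[ \frac{a_p}{p^{\beta+1}}\sum_{v\in\tau^{(p)}}|\tau^{(p)}_v|^{\beta}\xrightarrow[p\to+\infty]{(d)}Z^H_\beta,\qquad Z^H_\beta=\int_0^1ds\int_0^{H(s)}dr\,\sigma_{r,s}(H)^{\beta-1}, \] where the convergence is taken along the infinite subsequence of $p$ such that $\mathbb{P}(|\tau|=p)>0$.
   Context: Let $\mathfrak{p}$ be a probability distribution on $\mathbb{N}=\{0,1,\dots\}$ with $\sum_k k\,\mathfrak{p}(k)=1$ and $1>\mathfrak{p}(1)+\mathfrak{p}(0)\ge\mathfrak{p}(0)>0$, in the domain of attraction of a symmetric stable law with Laplace exponent $\psi(\lambda)=\kappa\lambda^\gamma$, $\gamma\in(1,2]$, $\kappa>0$, with renormalizing sequence $(a_p)$: if $(\xi_k)$ are i.i.d. with law $\mathfrak{p}$ and $W_p=\sum_{k=1}^p\xi_k-p$, then $W_p/a_p\to X$ in distribution with $\mathbb{E}[e^{-\lambda X}]=e^{\psi(\lambda)}$, $\lambda\ge0$. Let $\tau$ be a Galton–Watson tree with offspring distribution $\mathfrak{p}$ and $\tau^{(p)}$ distributed as $\tau$ conditioned on having $p$ nodes. For a finite rooted ordered tree $\mathbf{t}$ and $v\in\mathbf{t}$, $\mathbf{t}_v$ is the subtree formed by $v$ and its descendants, $|\cdot|$ the number of nodes. The contour process $C^{\mathbf{t}}$ is the continuous function on $[0,2|\mathbf{t}|]$ giving the distance to the root of a particle exploring the edges (length 1) at unit speed in depth-first lexicographic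 order, back at the root at time $2|\mathbf{t}|-2$, and $0$ on $[2|\mathbf{t}|-2,2|\mathbf{t}|]$. $H$ is the normalized excursion of the height process of the Lévy tree with branching mechanism $\psi$, which is the limit in distribution in $\mathcal{C}([0,1])$ of $(\frac{a_p}{p}C^{\tau^{(p)}}(2ps),s\in[0,1])$. For $h\in\mathcal{C}_+([0,1])$: $m_h(s,t)=\inf_{u\in[s\wedge t,s\vee t]}h(u)$ and $\sigma_{r,s}(h)=\int_0^1\mathbf{1}_{\{m_h(s,t)\ge r\}}dt$. *)

theory Defs
  imports "HOL-Probability.Probability"
begin

datatype tree = Node "tree list"

fun tsize :: "tree \<Rightarrow> nat" where
  "tsize (Node ts) = Suc (sum_list (map tsize ts))"

fun subtree_pow_sum :: "real \<Rightarrow> tree \<Rightarrow> real" where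
  "subtree_pow_sum \<beta> (Node ts) =
     real (tsize (Node ts)) powr \<beta> + sum_list (map (subtree_pow_sum \<beta>) ts)"

fun gw_weight :: "nat pmf \<Rightarrow> tree \<Rightarrow> real" where
  "gw_weight P (Node ts) = pmf P (length ts) * prod_list (map (gw_weight P) ts)"

definition gw_size_prob :: "nat pmf \<Rightarrow> nat \<Rightarrow> real" where
  "gw_size_prob P n = (\<Sum>t\<in>{t. tsize t = n}. gw_weight P t)"

definition cond_gw :: "nat pmf \<Rightarrow> nat \<Rightarrow> tree pmf" where
  "cond_gw P n = embed_pmf (\<lambda>t. if tsize t = n then gw_weight P t / gw_size_prob P n else 0)"

text \<open>Heights of the contour at integer times 0, 1, ..., 2|t|-2.\<close>
fun contour_seq :: "tree \<Rightarrow> nat list" where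
  "contour_seq (Node ts) = 0 # concat (map (\<lambda>s. map Suc (contour_seq s) @ [0]) ts)"

definition contour_at :: "tree \<Rightarrow> int \<Rightarrow> real" where
  "contour_at t k = (if 0 \<le> k \<and> nat k < length (contour_seq t)
                     then real (contour_seq t ! nat k) else 0)"

text \<open>The contour function C^t: linear interpolation; it is 0 on [2|t|-2, 2|t|].\<close>
definition contour :: "tree \<Rightarrow> real \<Rightarrow> real" where
  "contour t x = (1 - (x - of_int \<lfloor>x\<rfloor>)) * contour_at t \<lfloor>x\<rfloor>
                 + (x - of_int \<lfloor>x\<rfloor>) * contour_at t (\<lfloor>x\<rfloor> + 1)"

text \<open>Elements of C([0,1]) are represented isometrically in the space of bounded continuous
  functions real => real (sup-norm) by extending them constantly outside [0,1].\<close>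
definition clamp01 :: "real \<Rightarrow> real" where
  "clamp01 s = max 0 (min 1 s)"

definition rescaled_contour :: "real \<Rightarrow> tree \<Rightarrow> (real \<Rightarrow>\<^sub>C real)" where
  "rescaled_contour a t =
     Bcontfun (\<lambda>s. a / real (tsize t) * contour t (2 * real (tsize t) * clamp01 s))"

definition conv_distr :: "'i filter \<Rightarrow> ('i \<Rightarrow> 'a::topological_space measure) \<Rightarrow> 'a measure \<Rightarrow> bool" where
  "conv_distr F M L \<longleftrightarrow>
     (\<forall>f::'a \<Rightarrow> real. continuous_on UNIV f \<and> bounded (range f) \<longrightarrow>
        ((\<lambda>i. \<integral>x. f x \<partial>M i) \<longlongrightarrow> (\<integral>x. f x \<partial>L)) F)"

fun iid_sum :: "nat pmf \<Rightarrow> nat \<Rightarrow> nat pmf" where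
  "iid_sum P 0 = return_pmf 0"
| "iid_sum P (Suc n) = bind_pmf (iid_sum P n) (\<lambda>s. map_pmf (\<lambda>x. s + x) P)"

definition m_fun :: "(real \<Rightarrow> real) \<Rightarrow> real \<Rightarrow> real \<Rightarrow> real" where
  "m_fun h s t = Inf (h ` {min s t..max s t})"

definition sigma_fun :: "(real \<Rightarrow> real) \<Rightarrow> real \<Rightarrow> real \<Rightarrow> real" where
  "sigma_fun h r s = measure lborel {t\<in>{0..1}. m_fun h s t \<ge> r}"

text \<open>x^a for x >= 0 with the convention x^0 = 1 (Isabelle has 0 powr 0 = 0).\<close>
definition rpow :: "real \<Rightarrow> real \<Rightarrow> real" where
  "rpow x a = (if a = 0 then 1 else x powr a)"

definition Z_fun :: "real \<Rightarrow> (real \<Rightarrow> real) \<Rightarrow> real" where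
  "Z_fun \<beta> h = (LBINT s=0..1. (LBINT r=0..h s. rpow (sigma_fun h r s) (\<beta> - 1)))"

end

theory Submission
  imports Defs
begin

text \<open>
  The functional Z_\<beta> is 3-Lipschitz for the supremum norm, so by the continuous mapping
  theorem Z_\<beta> of the rescaled contour converges in law to Z_\<beta>^H. It therefore suffices that,
  for every tree t with p vertices, the rescaled subtree sum differs from Z_\<beta> of the rescaled
  contour by at most (1 + \<beta>) a_p / p, which tends to 0 because a_p = o(p).

  For the contour C of t, cutting at the returns of C to 0 and peeling off the first and last
  edge of every excursion shows that the double integral of \<sigma>^(\<beta>-1) under C lies between
  \<Sum>_{v \<noteq> root} (2|t_v| - 2)^\<beta> and \<Sum>_{v \<noteq> root} (2|t_v|)^\<beta>; by the mean value theorem these sums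
  differ by at most \<beta> (2p)^\<beta>. The affine rescaling of time by 1/(2p) and of height by a_p/p
  multiplies the functional by (a_p/p) (2p)^(-\<beta>).

  That a_p = o(p) follows from the stable limit: the walk W_p is bounded below by -p, so if
  a_p / p stayed away from 0 along a subsequence, the limit would be bounded below and its
  Laplace transform would grow at most exponentially, contradicting exp(\<kappa> \<lambda>^\<gamma>) with \<gamma> > 1.
\<close>

lemma measure_lborel_between:
  fixes S :: "real set"
  assumes "{l<..<u} \<subseteq> S" "S \<subseteq> {l..u}" "l \<le> u"
  shows "S \<in> sets borel" "measure lborel S = u - l"
proof -
  have eq: "S = {l<..<u} \<union> (S \<inter> {l,u})" using assms by auto
  have fin: "finite (S \<inter> {l,u})" by auto
  show Sb: "S \<in> sets borel"
    by (subst eq) (intro sets.Un borel_open open_greaterThanLessThan borel_closed finite_imp_closed fin)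
  have "measure lborel S \<le> measure lborel {l..u}"
    by (rule measure_mono_fmeasurable) (use assms Sb in \<open>auto simp: fmeasurable_def\<close>)
  moreover have "emeasure lborel S < \<top>"
    using emeasure_mono[of S "{l..u}" lborel] assms(2) by (auto simp: less_top[symmetric] emeasure_lborel_Icc_eq top_unique)
  then have "measure lborel {l<..<u} \<le> measure lborel S"
    by (intro measure_mono_fmeasurable) (use assms Sb in \<open>auto simp: fmeasurable_def\<close>)
  ultimately show "measure lborel S = u - l" using assms by simp
qed

lemma is_interval_Inf_Sup:
  fixes S :: "real set"
  assumes "is_interval S" "bounded S" "S \<noteq> {}"
  shows "{Inf S<..<Sup S} \<subseteq> S" "S \<subseteq> {Inf S..Sup S}" "Inf S \<le> Sup S"
proof -
  have bb: "bdd_above S" "bdd_below S" using assms bounded_imp_bdd_above bounded_imp_bdd_below by auto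
  show "S \<subseteq> {Inf S..Sup S}" using bb by (auto intro: cInf_lower cSup_upper)
  then show "Inf S \<le> Sup S" using assms(3) by auto
  show "{Inf S<..<Sup S} \<subseteq> S"
  proof
    fix x assume x: "x \<in> {Inf S<..<Sup S}"
    then obtain a where a: "a \<in> S" "a < x" using cInf_less_iff[OF assms(3) bb(2)] by auto
    obtain b where b: "b \<in> S" "x < b" using x less_cSup_iff[OF assms(3) bb(1)] by auto
    show "x \<in> S" using assms(1) a b unfolding is_interval_1 by (meson less_imp_le)
  qed
qed

lemma is_interval_borel:
  fixes S :: "real set"
  assumes "is_interval S" "bounded S"
  shows "S \<in> sets borel"
proof (cases "S = {}")
  case False
  show ?thesis using is_interval_Inf_Sup[OF assms False] by (intro measure_lborel_between(1)) auto
qed simp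

lemma measure_lborel_is_interval:
  fixes S :: "real set"
  assumes "is_interval S" "bounded S" "S \<noteq> {}"
  shows "measure lborel S = Sup S - Inf S"
  using is_interval_Inf_Sup[OF assms] by (intro measure_lborel_between(2)) auto

lemma measure_lborel_affine_image:
  fixes S :: "real set"
  assumes "is_interval S" "bounded S" "c > 0"
  shows "measure lborel ((\<lambda>x. c * x + d) ` S) = c * measure lborel S"
proof (cases "S = {}")
  case False
  note I = is_interval_Inf_Sup[OF assms(1,2) False]
  let ?l = "Inf S" and ?u = "Sup S"
  have "{c * ?l + d<..<c * ?u + d} \<subseteq> (\<lambda>x. c * x + d) ` S"
  proof
    fix y assume y: "y \<in> {c * ?l + d<..<c * ?u + d}"
    have "(y - d) / c \<in> {?l<..<?u}" using y assms(3) by (auto simp: field_simps)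
    then have "(y - d) / c \<in> S" using I by auto
    moreover have "y = c * ((y - d) / c) + d" using assms(3) by simp
    ultimately show "y \<in> (\<lambda>x. c * x + d) ` S" by blast
  qed
  moreover have "(\<lambda>x. c * x + d) ` S \<subseteq> {c * ?l + d..c * ?u + d}"
    using I assms(3) by auto
  ultimately have "measure lborel ((\<lambda>x. c * x + d) ` S) = (c * ?u + d) - (c * ?l + d)"
    using I assms(3) by (intro measure_lborel_between(2)) (auto intro: mult_left_mono)
  also have "\<dots> = c * measure lborel S"
    by (subst measure_lborel_is_interval[OF assms(1,2) False]) (simp add: algebra_simps)
  finally show ?thesis .
qed simp

lemma measure_lborel_mono_Icc:
  fixes S T :: "real set"
  assumes "S \<in> sets borel" "T \<in> sets borel" "S \<subseteq> T" "T \<subseteq> {A..B}"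
  shows "measure lborel S \<le> measure lborel T"
proof -
  have "emeasure lborel T \<le> emeasure lborel {A..B}" using assms by (intro emeasure_mono) auto
  then have "emeasure lborel T < \<top>" by (auto simp: less_top[symmetric] emeasure_lborel_Icc_eq top_unique)
  then show ?thesis using assms by (intro measure_mono_fmeasurable) (auto simp: fmeasurable_def)
qed

lemma lbint_cong:
  fixes f g :: "real \<Rightarrow> real"
  assumes "\<And>x. min a b < x \<Longrightarrow> x < max a b \<Longrightarrow> f x = g x"
  shows "(LBINT x=ereal a..ereal b. f x) = (LBINT x=ereal a..ereal b. g x)"
  by (rule interval_integral_cong) (use assms in \<open>auto simp: einterval_iff min_def max_def split: if_splits\<close>)

lemma lbint_affine_subst_le:
  fixes f :: "real \<Rightarrow> real"
  assumes "c > 0" "a \<le> b"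
  shows "(LBINT x=ereal a..ereal b. f x) = c * (LBINT y=ereal ((a-t)/c)..ereal ((b-t)/c). f (t + c*y))"
proof -
  have le: "(a-t)/c \<le> (b-t)/c" using assms by (simp add: divide_right_mono)
  have ind: "indicator {a<..<b} (t + c * y) =
     (indicator {(a-t)/c<..<(b-t)/c} y :: real)" for y
    using assms by (auto simp: indicator_def einterval_iff field_simps)
  have "(LBINT x=ereal a..ereal b. f x) = (\<integral>x. indicator (einterval (ereal a) (ereal b)) x *\<^sub>R f x \<partial>lborel)"
    using assms by (simp add: interval_lebesgue_integral_def set_lebesgue_integral_def)
  also have "\<dots> = \<bar>c\<bar> *\<^sub>R (\<integral>y. indicator (einterval (ereal a) (ereal b)) (t + c * y) *\<^sub>R f (t + c * y) \<partial>lborel)"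
    using assms by (intro lborel_integral_real_affine) simp
  also have "\<dots> = c * (LBINT y=ereal ((a-t)/c)..ereal ((b-t)/c). f (t + c*y))"
    using assms le by (simp add: ind interval_lebesgue_integral_def set_lebesgue_integral_def)
  finally show ?thesis .
qed

lemma lbint_affine_subst:
  fixes f :: "real \<Rightarrow> real"
  assumes "c > 0"
  shows "(LBINT x=ereal a..ereal b. f x) = c * (LBINT y=ereal ((a-t)/c)..ereal ((b-t)/c). f (t + c*y))"
proof (cases "a \<le> b")
  case True then show ?thesis using lbint_affine_subst_le[OF assms] by blast
next
  case False
  then have "(LBINT x=ereal a..ereal b. f x) = - (LBINT x=ereal b..ereal a. f x)"
    by (metis interval_integral_endpoints_reverse)
  also have "\<dots> = - (c * (LBINT y=ereal ((b-t)/c)..ereal ((a-t)/c). f (t + c*y)))"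
    using False lbint_affine_subst_le[OF assms, of b a] by simp
  also have "\<dots> = c * (LBINT y=ereal ((a-t)/c)..ereal ((b-t)/c). f (t + c*y))"
    by (metis interval_integral_endpoints_reverse minus_mult_right)
  finally show ?thesis .
qed

lemma lbint_shift:
  fixes f :: "real \<Rightarrow> real"
  shows "(LBINT x=ereal a..ereal b. f (x + d)) = (LBINT x=ereal (a+d)..ereal (b+d). f x)"
  using lbint_affine_subst[of 1 "a+d" "b+d" f d] by (simp add: add.commute)

definition locally_integrable :: "(real \<Rightarrow> real) \<Rightarrow> bool" where
  "locally_integrable f \<longleftrightarrow> (\<forall>a b. set_integrable lborel {a..b} f)"

lemma locally_integrable_interval:
  assumes "locally_integrable f"
  shows "interval_lebesgue_integrable lborel (ereal a) (ereal b) f"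
  using assms unfolding locally_integrable_def interval_lebesgue_integrable_def
  by (auto intro: set_integrable_subset[of _ "{min a b..max a b}"] simp: einterval_iff min_def max_def)

lemma locally_integrable_bounded:
  fixes f :: "real \<Rightarrow> real"
  assumes "f \<in> borel_measurable borel" "\<And>x. \<bar>f x\<bar> \<le> M"
  shows "locally_integrable f"
  unfolding locally_integrable_def
proof (intro allI)
  fix a b :: real
  show "set_integrable lborel {a..b} f"
  proof (rule set_integrable_bound[where f="\<lambda>_. M"])
    show "set_integrable lborel {a..b} (\<lambda>_. M)"
      by (rule borel_integrable_atLeastAtMost') simp
    show "set_borel_measurable lborel {a..b} f"
      using assms(1) unfolding set_borel_measurable_def by measurable
    show "AE x\<in>{a..b} in lborel. norm (f x) \<le> norm M"
      using assms(2) by (auto intro: order_trans[OF _ abs_ge_self])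
  qed
qed

lemma borel_measurable_antimono:
  fixes g :: "real \<Rightarrow> real"
  assumes "\<And>x y. x \<le> y \<Longrightarrow> g y \<le> g x"
  shows "g \<in> borel_measurable borel"
proof -
  have "mono (\<lambda>x. g (- x))" using assms by (intro monoI) auto
  then have "(\<lambda>x. g (- x)) \<in> borel_measurable borel" by (rule borel_measurable_mono)
  then have "(\<lambda>x. g (- (- x))) \<in> borel_measurable borel" by measurable
  then show ?thesis by simp
qed

lemma locally_integrable_antimono:
  fixes g :: "real \<Rightarrow> real"
  assumes "\<And>x y. x \<le> y \<Longrightarrow> g y \<le> g x" "\<And>x. \<bar>g x\<bar> \<le> M"
  shows "locally_integrable g"
proof -
  have "g \<in> borel_measurable borel" by (rule borel_measurable_antimono) (rule assms(1))
  then show ?thesis using assms(2) by (rule locally_integrable_bounded)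
qed

lemma locally_integrable_shift:
  fixes g :: "real \<Rightarrow> real"
  assumes "g \<in> borel_measurable borel" "\<And>x. \<bar>g x\<bar> \<le> M"
  shows "locally_integrable (\<lambda>x. g (x + c))"
  by (rule locally_integrable_bounded[where M=M]) (use assms in auto)

lemma lbint_mono:
  fixes f g :: "real \<Rightarrow> real"
  assumes "a \<le> b" "locally_integrable f" "locally_integrable g" "\<And>x. a \<le> x \<Longrightarrow> x \<le> b \<Longrightarrow> f x \<le> g x"
  shows "(LBINT x=ereal a..ereal b. f x) \<le> (LBINT x=ereal a..ereal b. g x)"
  using assms(1,2,3) unfolding locally_integrable_def
  by (simp add: interval_integral_Icc) (rule set_integral_mono, auto intro: assms(4))

lemma lbint_bounds:
  fixes f :: "real \<Rightarrow> real"
  assumes "a \<le> b" "locally_integrable f" "\<And>x. a \<le> x \<Longrightarrow> x \<le> b \<Longrightarrow> m \<le> f x \<and> f x \<le> M"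
  shows "(b - a) * m \<le> (LBINT x=ereal a..ereal b. f x)" "(LBINT x=ereal a..ereal b. f x) \<le> (b - a) * M"
proof -
  have c: "locally_integrable (\<lambda>_. c)" for c :: real
    by (rule locally_integrable_bounded[where M="\<bar>c\<bar>"]) auto
  have "(LBINT x=ereal a..ereal b. m) \<le> (LBINT x=ereal a..ereal b. f x)"
    using assms by (intro lbint_mono c) auto
  then show "(b - a) * m \<le> (LBINT x=ereal a..ereal b. f x)" using assms(1)
    by (simp add: interval_integral_const mult.commute)
  have "(LBINT x=ereal a..ereal b. f x) \<le> (LBINT x=ereal a..ereal b. M)"
    using assms by (intro lbint_mono c) auto
  then show "(LBINT x=ereal a..ereal b. f x) \<le> (b - a) * M" using assms(1)
    by (simp add: interval_integral_const mult.commute)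
qed

lemma lbint_sum:
  fixes f :: "real \<Rightarrow> real"
  assumes "locally_integrable f"
  shows "(LBINT x=ereal a..ereal b. f x) + (LBINT x=ereal b..ereal c. f x) = (LBINT x=ereal a..ereal c. f x)"
  by (rule interval_integral_sum) (use locally_integrable_interval[OF assms] in \<open>simp add: min_def max_def\<close>)

lemma lbint_abs_le:
  fixes f :: "real \<Rightarrow> real"
  assumes "locally_integrable f" "\<And>x. 0 \<le> f x \<and> f x \<le> M"
  shows "\<bar>LBINT x=ereal a..ereal b. f x\<bar> \<le> \<bar>b - a\<bar> * M"
proof (cases "a \<le> b")
  case True
  from lbint_bounds[OF True assms(1), of 0 M] assms(2) show ?thesis using True by auto
next
  case False
  then have "b \<le> a" by simp
  from lbint_bounds[OF this assms(1), of 0 M] assms(2) show ?thesis using False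
    by (subst interval_integral_endpoints_reverse) auto
qed

lemma lbint_increment_bounds:
  fixes f :: "real \<Rightarrow> real"
  assumes "locally_integrable f" "\<And>x. 0 \<le> f x \<and> f x \<le> M" "x \<le> y"
  shows "0 \<le> (LBINT t=ereal 0..ereal y. f t) - (LBINT t=ereal 0..ereal x. f t)"
        "(LBINT t=ereal 0..ereal y. f t) - (LBINT t=ereal 0..ereal x. f t) \<le> (y - x) * M"
proof -
  have eq: "(LBINT t=ereal 0..ereal y. f t) - (LBINT t=ereal 0..ereal x. f t) = (LBINT t=ereal x..ereal y. f t)"
    using lbint_sum[OF assms(1), of 0 x y] by simp
  show "0 \<le> (LBINT t=ereal 0..ereal y. f t) - (LBINT t=ereal 0..ereal x. f t)"
    using lbint_bounds(1)[OF assms(3,1), where m=0 and M=M] assms(2) by (simp add: eq)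
  show "(LBINT t=ereal 0..ereal y. f t) - (LBINT t=ereal 0..ereal x. f t) \<le> (y - x) * M"
    using lbint_bounds(2)[OF assms(3,1), where m=0 and M=M] assms(2) by (simp add: eq)
qed

lemma lbint_squeeze:
  fixes f g g' h :: "real \<Rightarrow> real"
  assumes int: "locally_integrable f" "locally_integrable g" "locally_integrable g'" "locally_integrable h"
    and le: "\<And>x. f x \<le> g x \<and> g x \<le> h x" "\<And>x. f x \<le> g' x \<and> g' x \<le> h x"
  shows "\<bar>(LBINT x=ereal a..ereal b. g x) - (LBINT x=ereal a..ereal b. g' x)\<bar>
         \<le> \<bar>(LBINT x=ereal a..ereal b. h x) - (LBINT x=ereal a..ereal b. f x)\<bar>"
proof -
  have squeeze: "\<bar>(LBINT x=ereal a..ereal b. g x) - (LBINT x=ereal a..ereal b. g' x)\<bar>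
         \<le> \<bar>(LBINT x=ereal a..ereal b. h x) - (LBINT x=ereal a..ereal b. f x)\<bar>" if ab: "a \<le> b" for a b
  proof -
    have "(LBINT x=ereal a..ereal b. f x) \<le> (LBINT x=ereal a..ereal b. g x)"
      "(LBINT x=ereal a..ereal b. g x) \<le> (LBINT x=ereal a..ereal b. h x)"
      "(LBINT x=ereal a..ereal b. f x) \<le> (LBINT x=ereal a..ereal b. g' x)"
      "(LBINT x=ereal a..ereal b. g' x) \<le> (LBINT x=ereal a..ereal b. h x)"
      using le by (intro lbint_mono[OF ab] int; simp)+
    then show ?thesis by linarith
  qed
  show ?thesis
  proof (cases "a \<le> b")
    case False
    then show ?thesis using squeeze[of b a]
      by (subst (1 2 3 4) interval_integral_endpoints_reverse) linarith
  qed (rule squeeze)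
qed

lemma lbint_shift_window:
  fixes g :: "real \<Rightarrow> real"
  assumes mono: "\<And>x y. x \<le> y \<Longrightarrow> g y \<le> g x" and bnd: "\<And>x. 0 \<le> g x \<and> g x \<le> M" and w: "0 \<le> w"
  shows "\<bar>(LBINT r=ereal 0..ereal b. g (r - w)) - (LBINT r=ereal 0..ereal b. g (r + w))\<bar> \<le> 2 * w * M"
proof -
  have int: "locally_integrable g" using mono bnd by (intro locally_integrable_antimono[where M=M]) auto
  define F where "F x = (LBINT t=ereal 0..ereal x. g t)" for x
  have F: "0 \<le> F y - F x \<and> F y - F x \<le> (y - x) * M" if "x \<le> y" for x y
    unfolding F_def using lbint_increment_bounds[OF int bnd that] by auto
  have "(LBINT r=ereal 0..ereal b. g (r + - w)) = F (b - w) - F (- w)"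
    unfolding F_def lbint_shift using lbint_sum[OF int, of 0 "-w" "b - w"] by simp
  moreover have "(LBINT r=ereal 0..ereal b. g (r + w)) = F (b + w) - F w"
    unfolding F_def lbint_shift using lbint_sum[OF int, of 0 w "b + w"] by simp
  ultimately have "(LBINT r=ereal 0..ereal b. g (r - w)) - (LBINT r=ereal 0..ereal b. g (r + w))
      = (F w - F (- w)) - (F (b + w) - F (b - w))"
    by simp
  moreover have "0 \<le> F w - F (- w) \<and> F w - F (- w) \<le> 2 * w * M" using F[of "-w" w] w by auto
  moreover have "0 \<le> F (b + w) - F (b - w) \<and> F (b + w) - F (b - w) \<le> 2 * w * M"
    using F[of "b - w" "b + w"] w by auto
  ultimately show ?thesis by linarith
qed

lemma lbint_antimono_sandwich:
  fixes g1 g2 :: "real \<Rightarrow> real"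
  assumes mono1: "\<And>x y. x \<le> y \<Longrightarrow> g1 y \<le> g1 x"
    and mono2: "\<And>x y. x \<le> y \<Longrightarrow> g2 y \<le> g2 x"
    and bnd1: "\<And>x. 0 \<le> g1 x \<and> g1 x \<le> M" and bnd2: "\<And>x. 0 \<le> g2 x \<and> g2 x \<le> M"
    and sw: "\<And>r. g1 (r + w) \<le> g2 r \<and> g2 r \<le> g1 (r - w)"
    and w: "0 \<le> w" and bb: "\<bar>b1 - b2\<bar> \<le> w"
  shows "\<bar>(LBINT r=ereal 0..ereal b2. g2 r) - (LBINT r=ereal 0..ereal b1. g1 r)\<bar> \<le> 3 * M * w"
proof -
  have M: "0 \<le> M" using bnd1[of 0] by simp
  have m1: "g1 \<in> borel_measurable borel" by (rule borel_measurable_antimono) (rule mono1)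
  have int1: "locally_integrable g1" using mono1 bnd1 by (intro locally_integrable_antimono[where M=M]) auto
  have int2: "locally_integrable g2" using mono2 bnd2 by (intro locally_integrable_antimono[where M=M]) auto
  have "locally_integrable (\<lambda>r. g1 (r + c))" for c
    by (rule locally_integrable_shift[OF m1, where M=M]) (use bnd1 in auto)
  from this[of w] this[of "- w"]
  have "\<bar>(LBINT r=ereal 0..ereal b1. g2 r) - (LBINT r=ereal 0..ereal b1. g1 r)\<bar>
      \<le> \<bar>(LBINT r=ereal 0..ereal b1. g1 (r - w)) - (LBINT r=ereal 0..ereal b1. g1 (r + w))\<bar>"
    by (intro lbint_squeeze int1 int2) (use sw mono1 w in auto)
  also have "\<dots> \<le> 2 * w * M" by (rule lbint_shift_window[OF mono1 bnd1 w])
  finally have mid: "\<bar>(LBINT r=ereal 0..ereal b1. g2 r) - (LBINT r=ereal 0..ereal b1. g1 r)\<bar> \<le> 2 * w * M" .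
  have "(LBINT r=ereal 0..ereal b2. g2 r) - (LBINT r=ereal 0..ereal b1. g2 r) = (LBINT r=ereal b1..ereal b2. g2 r)"
    using lbint_sum[OF int2, of 0 b1 b2] by simp
  moreover have "\<bar>LBINT r=ereal b1..ereal b2. g2 r\<bar> \<le> \<bar>b2 - b1\<bar> * M"
    by (rule lbint_abs_le[OF int2 bnd2])
  moreover have "\<bar>b2 - b1\<bar> * M \<le> w * M" using bb M by (intro mult_right_mono) auto
  ultimately show ?thesis using mid by (simp add: algebra_simps)
qed

lemma continuous_on_clamp_extension:
  fixes f :: "real \<Rightarrow> real"
  assumes "a \<le> b" "continuous_on {a..b} f"
  shows "continuous_on UNIV (\<lambda>x. f (max a (min b x)))"
proof -
  have "continuous_on UNIV (\<lambda>x. max a (min b x))" by (intro continuous_intros)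
  moreover have "(\<lambda>x. max a (min b x)) ` UNIV \<subseteq> {a..b}" using assms(1) by auto
  ultimately show ?thesis using continuous_on_compose2[OF assms(2)] by blast
qed

lemma lbint_bounds_cont:
  fixes f :: "real \<Rightarrow> real"
  assumes ab: "a \<le> b" and c: "continuous_on {a..b} f" and bnd: "\<And>x. a \<le> x \<Longrightarrow> x \<le> b \<Longrightarrow> m \<le> f x \<and> f x \<le> M"
  shows "(b - a) * m \<le> (LBINT x=ereal a..ereal b. f x)" "(LBINT x=ereal a..ereal b. f x) \<le> (b - a) * M"
proof -
  define f' where "f' x = f (max a (min b x))" for x
  have eq: "(LBINT x=ereal a..ereal b. f x) = (LBINT x=ereal a..ereal b. f' x)"
    unfolding f'_def using ab by (intro lbint_cong) (auto simp: min_def max_def)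
  have cc: "continuous_on UNIV f'" unfolding f'_def by (rule continuous_on_clamp_extension[OF ab c])
  have b': "\<bar>f' x\<bar> \<le> \<bar>m\<bar> + \<bar>M\<bar>" for x
  proof -
    have "a \<le> max a (min b x)" "max a (min b x) \<le> b" using ab by auto
    from bnd[OF this] show ?thesis unfolding f'_def by linarith
  qed
  have f'_int: "locally_integrable f'" by (rule locally_integrable_bounded[OF borel_measurable_continuous_onI[OF cc] b'])
  have bnd': "m \<le> f' x \<and> f' x \<le> M" if "a \<le> x" "x \<le> b" for x
    unfolding f'_def using bnd[of x] that by (simp add: max_def min_def)
  show "(b - a) * m \<le> (LBINT x=ereal a..ereal b. f x)" "(LBINT x=ereal a..ereal b. f x) \<le> (b - a) * M"
    unfolding eq using lbint_bounds[OF ab f'_int bnd'] by auto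
qed

lemma lbint_sum_cont:
  fixes f :: "real \<Rightarrow> real"
  assumes "a \<le> b" "b \<le> c" "continuous_on {a..c} f"
  shows "(LBINT x=ereal a..ereal b. f x) + (LBINT x=ereal b..ereal c. f x) = (LBINT x=ereal a..ereal c. f x)"
  by (rule interval_integral_sum)
     (use assms interval_integrable_continuous_on[OF _ assms(3)] in \<open>auto simp: min_def max_def\<close>)

lemma lbint_diff_cont:
  fixes f g :: "real \<Rightarrow> real"
  assumes "a \<le> b" "continuous_on {a..b} f" "continuous_on {a..b} g"
  shows "(LBINT x=ereal a..ereal b. f x - g x) = (LBINT x=ereal a..ereal b. f x) - (LBINT x=ereal a..ereal b. g x)"
  by (rule interval_lebesgue_integral_diff(2))
     (use assms interval_integrable_continuous_on in auto)

lemma lbint_cont_eq_integral: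
  fixes f :: "real \<Rightarrow> real"
  assumes "a \<le> b" "continuous_on {a..b} f"
  shows "(LBINT x=ereal a..ereal b. f x) = integral {a..b} f"
  using assms by (intro interval_integral_eq_integral borel_integrable_atLeastAtMost') auto

section \<open>The functional Z on an interval\<close>

lemma rpow_nonneg: "0 \<le> x \<Longrightarrow> 0 \<le> rpow x a"
  by (simp add: rpow_def)

lemma rpow_mono: "0 \<le> x \<Longrightarrow> x \<le> y \<Longrightarrow> 0 \<le> a \<Longrightarrow> rpow x a \<le> rpow y a"
  by (auto simp: rpow_def intro: powr_mono2)

lemma rpow_mult: "rpow (x * y) a = rpow x a * rpow y a"
  by (simp add: rpow_def powr_mult)

lemma mult_rpow_eq_powr:
  assumes "0 \<le> x"
  shows "x * rpow x (\<beta> - 1) = x powr \<beta>"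
  using powr_mult_base[OF assms, of "\<beta> - 1"] by (cases "x = 0") (auto simp: rpow_def)

text \<open>For continuous h, level_component h A B r s is the set of t \<in> [A,B] with m_h(s,t) \<ge> r
  (see sigma_on_eq_measure); being an interval, its measure is easy to control.\<close>

definition level_component :: "(real \<Rightarrow> real) \<Rightarrow> real \<Rightarrow> real \<Rightarrow> real \<Rightarrow> real \<Rightarrow> real set" where
  "level_component h A B r s = {t\<in>{A..B}. \<forall>u\<in>{min s t..max s t}. r \<le> h u}"

definition sigma_on :: "(real \<Rightarrow> real) \<Rightarrow> real \<Rightarrow> real \<Rightarrow> real \<Rightarrow> real \<Rightarrow> real" where
  "sigma_on h A B r s = measure lborel {t\<in>{A..B}. m_fun h s t \<ge> r}"

definition sigma_pow :: "real \<Rightarrow> (real \<Rightarrow> real) \<Rightarrow> real \<Rightarrow> real \<Rightarrow> real \<Rightarrow> real \<Rightarrow> real" where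
  "sigma_pow \<beta> h A B s r = rpow (sigma_on h A B r s) (\<beta> - 1)"

definition Z_inner :: "real \<Rightarrow> (real \<Rightarrow> real) \<Rightarrow> real \<Rightarrow> real \<Rightarrow> real \<Rightarrow> real" where
  "Z_inner \<beta> h A B s = (LBINT r=ereal 0..ereal (h s). sigma_pow \<beta> h A B s r)"

text \<open>Other intervals are needed
  because splitting a contour at its zeros yields the contours of subtrees on shifted intervals.\<close>

definition Z_on :: "real \<Rightarrow> (real \<Rightarrow> real) \<Rightarrow> real \<Rightarrow> real \<Rightarrow> real" where
  "Z_on \<beta> h A B = (LBINT s=ereal A..ereal B. Z_inner \<beta> h A B s)"

lemma Z_fun_eq_Z_on: "Z_fun \<beta> h = Z_on \<beta> h 0 1"
  unfolding Z_fun_def Z_on_def Z_inner_def sigma_pow_def sigma_on_def sigma_fun_def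
  by (simp add: zero_ereal_def one_ereal_def)

lemma le_m_fun_iff:
  assumes "continuous_on {A..B} h" "s \<in> {A..B}" "t \<in> {A..B}"
  shows "(r \<le> m_fun h s t) \<longleftrightarrow> (\<forall>u\<in>{min s t..max s t}. r \<le> h u)"
proof -
  have sub: "{min s t..max s t} \<subseteq> {A..B}" using assms(2,3) by auto
  have "compact (h ` {min s t..max s t})"
    by (rule compact_continuous_image) (use continuous_on_subset[OF assms(1) sub] in auto)
  then have "bdd_below (h ` {min s t..max s t})" by (simp add: bounded_imp_bdd_below compact_imp_bounded)
  moreover have "h ` {min s t..max s t} \<noteq> {}" by auto
  ultimately show ?thesis unfolding m_fun_def by (simp add: le_cInf_iff)
qed

lemma m_fun_cong:
  assumes "\<And>u. u \<in> {min s t..max s t} \<Longrightarrow> h u = h' u"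
  shows "m_fun h s t = m_fun h' s t"
  unfolding m_fun_def using assms by (metis image_cong)

lemma sigma_on_eq_measure:
  assumes "continuous_on {A..B} h" "s \<in> {A..B}"
  shows "sigma_on h A B r s = measure lborel (level_component h A B r s)"
proof -
  have "{t\<in>{A..B}. m_fun h s t \<ge> r} = level_component h A B r s"
    unfolding level_component_def using le_m_fun_iff[OF assms] by auto
  then show ?thesis unfolding sigma_on_def by simp
qed

lemma is_interval_level_component: "is_interval (level_component h A B r s)"
  unfolding is_interval_1
proof (intro ballI allI impI)
  fix a b x
  assume a: "a \<in> level_component h A B r s" and b: "b \<in> level_component h A B r s" and x: "a \<le> x \<and> x \<le> b"
  have "r \<le> h u" if u: "u \<in> {min s x..max s x}" for u
  proof (cases "s \<le> x")
    case True then show ?thesis using b u x by (auto simp: level_component_def)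
  next
    case False then show ?thesis using a u x by (auto simp: level_component_def)
  qed
  then show "x \<in> level_component h A B r s" using a b x by (auto simp: level_component_def)
qed

lemma bounded_level_component: "bounded (level_component h A B r s)"
  by (rule bounded_subset[of "{A..B}"]) (auto simp: level_component_def)

lemma level_component_subset: "level_component h A B r s \<subseteq> {A..B}"
  by (auto simp: level_component_def)

lemma level_component_borel: "level_component h A B r s \<in> sets borel"
  by (rule is_interval_borel[OF is_interval_level_component bounded_level_component])

lemma measure_level_component_bounds:
  assumes "A \<le> B"
  shows "0 \<le> measure lborel (level_component h A B r s)" "measure lborel (level_component h A B r s) \<le> B - A"
proof -
  have "measure lborel (level_component h A B r s) \<le> measure lborel {A..B}"
    by (rule measure_lborel_mono_Icc[OF level_component_borel _ level_component_subset order_refl]) simp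
  then show "0 \<le> measure lborel (level_component h A B r s)" "measure lborel (level_component h A B r s) \<le> B - A"
    using assms by auto
qed

lemma level_component_antimono: "r1 \<le> r2 \<Longrightarrow> level_component h A B r2 s \<subseteq> level_component h A B r1 s"
  by (auto simp: level_component_def)

lemma measure_level_component_antimono: "r1 \<le> r2 \<Longrightarrow> measure lborel (level_component h A B r2 s) \<le> measure lborel (level_component h A B r1 s)"
  by (rule measure_lborel_mono_Icc[OF level_component_borel level_component_borel level_component_antimono level_component_subset])

lemma sigma_pow_antimono_bounded:
  assumes "continuous_on {A..B} h" "s \<in> {A..B}" "\<beta> \<ge> 1"
  shows "\<And>x y. x \<le> y \<Longrightarrow> sigma_pow \<beta> h A B s y \<le> sigma_pow \<beta> h A B s x"
    "\<And>x. 0 \<le> sigma_pow \<beta> h A B s x \<and> sigma_pow \<beta> h A B s x \<le> rpow (B - A) (\<beta> - 1)"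
proof -
  have AB: "A \<le> B" using assms(2) by auto
  note M = measure_level_component_bounds[OF AB]
  show "sigma_pow \<beta> h A B s y \<le> sigma_pow \<beta> h A B s x" if "x \<le> y" for x y
    unfolding sigma_pow_def sigma_on_eq_measure[OF assms(1,2)]
    using M measure_level_component_antimono[OF that] assms(3) by (intro rpow_mono) auto
  show "0 \<le> sigma_pow \<beta> h A B s x \<and> sigma_pow \<beta> h A B s x \<le> rpow (B - A) (\<beta> - 1)" for x
    unfolding sigma_pow_def sigma_on_eq_measure[OF assms(1,2)]
    using M assms(3) by (auto intro: rpow_mono rpow_nonneg)
qed

lemma sigma_pow_mono:
  assumes "continuous_on {A..B} h" "continuous_on {A..B} h'" "s \<in> {A..B}" "s' \<in> {A..B}" "\<beta> \<ge> 1"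
    "level_component h A B r s \<subseteq> level_component h' A B r' s'"
  shows "sigma_pow \<beta> h A B s r \<le> sigma_pow \<beta> h' A B s' r'"
  unfolding sigma_pow_def sigma_on_eq_measure[OF assms(1,3)] sigma_on_eq_measure[OF assms(2,4)]
  using assms(3,5,6) measure_level_component_bounds[of A B]
  by (intro rpow_mono measure_lborel_mono_Icc[OF level_component_borel level_component_borel _ level_component_subset]) auto

lemma level_component_perturb:
  assumes e: "\<And>u. u \<in> {A..B} \<Longrightarrow> \<bar>h u - h' u\<bar> \<le> e" and s: "s \<in> {A..B}"
  shows "level_component h A B (r + e) s \<subseteq> level_component h' A B r s"
proof
  fix t assume t: "t \<in> level_component h A B (r + e) s"
  then have tA: "t \<in> {A..B}" by (auto simp: level_component_def)
  have "r \<le> h' u" if u: "u \<in> {min s t..max s t}" for u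
  proof -
    have "r + e \<le> h u" using t u by (auto simp: level_component_def)
    moreover have "u \<in> {A..B}" using u tA s by auto
    then have "\<bar>h u - h' u\<bar> \<le> e" by (rule e)
    ultimately show ?thesis by linarith
  qed
  then show "t \<in> level_component h' A B r s" using tA by (auto simp: level_component_def)
qed

lemma level_component_move:
  assumes osc: "\<And>u v. u \<in> {min s s'..max s s'} \<Longrightarrow> v \<in> {min s s'..max s s'} \<Longrightarrow> \<bar>h u - h v\<bar> \<le> w"
  shows "level_component h A B (r + w) s \<subseteq> level_component h A B r s'"
proof
  fix t assume t: "t \<in> level_component h A B (r + w) s"
  then have tA: "t \<in> {A..B}" and all: "\<And>u. u \<in> {min s t..max s t} \<Longrightarrow> r + w \<le> h u"
    by (auto simp: level_component_def)
  have "r \<le> h u" if u: "u \<in> {min s' t..max s' t}" for u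
  proof (cases "u \<in> {min s t..max s t}")
    case True
    have "0 \<le> w" using osc[of s s] by auto
    then show ?thesis using all[OF True] by linarith
  next
    case False
    then have "\<bar>h u - h s\<bar> \<le> w" using u by (intro osc) auto
    then show ?thesis using all[of s] by auto
  qed
  then show "t \<in> level_component h A B r s'" using tA by (auto simp: level_component_def)
qed

lemma Z_inner_compare:
  assumes h: "continuous_on {A..B} h" and h': "continuous_on {A..B} h'"
    and s: "s \<in> {A..B}" and s': "s' \<in> {A..B}" and \<beta>: "\<beta> \<ge> 1"
    and incl: "\<And>r. level_component h A B (r + w) s \<subseteq> level_component h' A B r s'"
      "\<And>r. level_component h' A B r s' \<subseteq> level_component h A B (r - w) s"
    and w: "0 \<le> w" "\<bar>h s - h' s'\<bar> \<le> w"
  shows "\<bar>Z_inner \<beta> h' A B s' - Z_inner \<beta> h A B s\<bar> \<le> 3 * rpow (B - A) (\<beta> - 1) * w"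
  unfolding Z_inner_def
proof (rule lbint_antimono_sandwich[OF _ _ _ _ _ w(1)])
  show "sigma_pow \<beta> h A B s (r + w) \<le> sigma_pow \<beta> h' A B s' r \<and> sigma_pow \<beta> h' A B s' r \<le> sigma_pow \<beta> h A B s (r - w)" for r
    using sigma_pow_mono[OF h h' s s' \<beta> incl(1)] sigma_pow_mono[OF h' h s' s \<beta> incl(2)] by simp
qed (use sigma_pow_antimono_bounded[OF h s \<beta>] sigma_pow_antimono_bounded[OF h' s' \<beta>] w(2) in auto)

lemma Z_inner_perturb:
  assumes h: "continuous_on {A..B} h" and h': "continuous_on {A..B} h'"
    and e: "\<And>u. u \<in> {A..B} \<Longrightarrow> \<bar>h u - h' u\<bar> \<le> e" and s: "s \<in> {A..B}" and \<beta>: "\<beta> \<ge> 1"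
  shows "\<bar>Z_inner \<beta> h' A B s - Z_inner \<beta> h A B s\<bar> \<le> 3 * rpow (B - A) (\<beta> - 1) * e"
proof (rule Z_inner_compare[OF h h' s s \<beta>])
  have e': "\<bar>h' u - h u\<bar> \<le> e" if "u \<in> {A..B}" for u using e[OF that] by linarith
  show "level_component h A B (r + e) s \<subseteq> level_component h' A B r s" for r
    by (rule level_component_perturb[OF e s])
  show "level_component h' A B r s \<subseteq> level_component h A B (r - e) s" for r
    using level_component_perturb[OF e' s, where r="r - e"] by simp
qed (use e[OF s] in auto)

lemma Z_inner_move:
  assumes h: "continuous_on {A..B} h" and s: "s \<in> {A..B}" and s': "s' \<in> {A..B}" and \<beta>: "\<beta> \<ge> 1"
    and osc: "\<And>u v. u \<in> {min s s'..max s s'} \<Longrightarrow> v \<in> {min s s'..max s s'} \<Longrightarrow> \<bar>h u - h v\<bar> \<le> w"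
  shows "\<bar>Z_inner \<beta> h A B s' - Z_inner \<beta> h A B s\<bar> \<le> 3 * rpow (B - A) (\<beta> - 1) * w"
proof (rule Z_inner_compare[OF h h s s' \<beta>])
  have osc': "\<bar>h u - h v\<bar> \<le> w" if "u \<in> {min s' s..max s' s}" "v \<in> {min s' s..max s' s}" for u v
    using osc that by (simp add: min.commute max.commute)
  show "level_component h A B (r + w) s \<subseteq> level_component h A B r s'" for r
    by (rule level_component_move[OF osc])
  show "level_component h A B r s' \<subseteq> level_component h A B (r - w) s" for r
    using level_component_move[OF osc', where A=A and B=B and r="r - w"] by simp
qed (use osc[of s s] osc[of s s'] in auto)

lemma continuous_on_Z_inner:
  assumes h: "continuous_on {A..B} h" and \<beta>: "\<beta> \<ge> 1"
  shows "continuous_on {A..B} (Z_inner \<beta> h A B)"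
proof (cases "A \<le> B")
  case False then show ?thesis by simp
next
  case AB: True
  define M where "M = rpow (B - A) (\<beta> - 1)"
  have M: "0 \<le> M" unfolding M_def using AB by (simp add: rpow_nonneg)
  have uc: "uniformly_continuous_on {A..B} h" by (rule compact_uniformly_continuous[OF h]) simp
  show ?thesis unfolding continuous_on_iff
  proof (intro ballI allI impI)
    fix s e :: real assume s: "s \<in> {A..B}" and e: "0 < e"
    define e' where "e' = e / (3 * M + 1)"
    have e': "0 < e'" unfolding e'_def using e M by simp
    obtain d where d: "d > 0" "\<And>x x'. x \<in> {A..B} \<Longrightarrow> x' \<in> {A..B} \<Longrightarrow> dist x' x < d \<Longrightarrow> dist (h x') (h x) < e'"
      using uc e' unfolding uniformly_continuous_on_def by metis
    show "\<exists>d>0. \<forall>s'\<in>{A..B}. dist s' s < d \<longrightarrow> dist (Z_inner \<beta> h A B s') (Z_inner \<beta> h A B s) < e"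
    proof (intro exI[of _ d] conjI ballI impI)
      fix s' assume s': "s' \<in> {A..B}" and ds: "dist s' s < d"
      have osc: "\<bar>h u - h v\<bar> \<le> e'" if "u \<in> {min s s'..max s s'}" "v \<in> {min s s'..max s s'}" for u v
      proof -
        have "u \<in> {A..B}" "v \<in> {A..B}" using that s s' by auto
        moreover have "dist u v < d" using that ds by (auto simp: dist_real_def)
        ultimately have "dist (h u) (h v) < e'" using d(2) by blast
        then show ?thesis by (simp add: dist_real_def)
      qed
      have "\<bar>Z_inner \<beta> h A B s' - Z_inner \<beta> h A B s\<bar> \<le> 3 * M * e'"
        unfolding M_def by (rule Z_inner_move[OF h s s' \<beta> osc])
      also have "\<dots> < e" unfolding e'_def using e M by (simp add: field_simps)
      finally show "dist (Z_inner \<beta> h A B s') (Z_inner \<beta> h A B s) < e" by (simp add: dist_real_def)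
    qed (use d in auto)
  qed
qed

lemma Z_on_eq_integral:
  assumes "continuous_on {A..B} h" "\<beta> \<ge> 1" "A \<le> B"
  shows "Z_on \<beta> h A B = integral {A..B} (Z_inner \<beta> h A B)"
  unfolding Z_on_def using assms continuous_on_Z_inner by (intro lbint_cont_eq_integral) auto

lemma Z_on_perturb:
  assumes h: "continuous_on {A..B} h" and h': "continuous_on {A..B} h'"
    and e: "\<And>u. u \<in> {A..B} \<Longrightarrow> \<bar>h u - h' u\<bar> \<le> e" and \<beta>: "\<beta> \<ge> 1" and AB: "A \<le> B"
  shows "\<bar>Z_on \<beta> h' A B - Z_on \<beta> h A B\<bar> \<le> (B - A) * (3 * rpow (B - A) (\<beta> - 1) * e)"
proof -
  have i1: "Z_inner \<beta> h A B integrable_on {A..B}" using continuous_on_Z_inner[OF h \<beta>] by (rule integrable_continuous_interval)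
  have i2: "Z_inner \<beta> h' A B integrable_on {A..B}" using continuous_on_Z_inner[OF h' \<beta>] by (rule integrable_continuous_interval)
  have "Z_on \<beta> h' A B - Z_on \<beta> h A B = integral {A..B} (\<lambda>s. Z_inner \<beta> h' A B s - Z_inner \<beta> h A B s)"
    using Z_on_eq_integral[OF h \<beta> AB] Z_on_eq_integral[OF h' \<beta> AB] integral_diff[OF i2 i1] by simp
  also have "\<bar>\<dots>\<bar> \<le> integral {A..B} (\<lambda>s. 3 * rpow (B - A) (\<beta> - 1) * e)"
  proof -
    have ci: "(\<lambda>s. 3 * rpow (B - A) (\<beta> - 1) * e) integrable_on {A..B}"
      by (rule integrable_continuous_interval) (rule continuous_on_const)
    show ?thesis
      using integral_norm_bound_integral[OF integrable_diff[OF i2 i1] ci]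
        Z_inner_perturb[OF h h' e _ \<beta>] by (simp del: integral_const_real)
  qed
  also have "\<dots> = (B - A) * (3 * rpow (B - A) (\<beta> - 1) * e)" using AB by simp
  finally show ?thesis .
qed

lemma Z_fun_lipschitz:
  assumes "\<beta> \<ge> 1"
  shows "3-lipschitz_on UNIV (\<lambda>h::real \<Rightarrow>\<^sub>C real. Z_fun \<beta> (apply_bcontfun h))"
proof (rule lipschitz_onI)
  fix h h' :: "real \<Rightarrow>\<^sub>C real"
  have "\<bar>Z_on \<beta> (apply_bcontfun h') 0 1 - Z_on \<beta> (apply_bcontfun h) 0 1\<bar> \<le>
      (1 - 0) * (3 * rpow (1 - 0) (\<beta> - 1) * dist h h')"
    by (rule Z_on_perturb[OF continuous_on_apply_bcontfun continuous_on_apply_bcontfun _ assms])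
       (use dist_bounded[of h _ h'] in \<open>auto simp: dist_real_def\<close>)
  then show "dist (Z_fun \<beta> (apply_bcontfun h)) (Z_fun \<beta> (apply_bcontfun h')) \<le> 3 * dist h h'"
    by (simp add: Z_fun_eq_Z_on rpow_def dist_real_def abs_minus_commute split: if_splits)
qed simp

lemma continuous_on_Z_fun:
  assumes "\<beta> \<ge> 1"
  shows "continuous_on UNIV (\<lambda>h::real \<Rightarrow>\<^sub>C real. Z_fun \<beta> (apply_bcontfun h))"
  by (rule lipschitz_on_continuous_on[OF Z_fun_lipschitz[OF assms]])

lemma Z_on_cong:
  assumes "\<And>u. u \<in> {A..B} \<Longrightarrow> h u = h' u" "A \<le> B"
  shows "Z_on \<beta> h A B = Z_on \<beta> h' A B"
proof -
  have sigma_eq: "sigma_on h A B r s = sigma_on h' A B r s" if s: "s \<in> {A..B}" for r s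
  proof -
    have "{t\<in>{A..B}. m_fun h s t \<ge> r} = {t\<in>{A..B}. m_fun h' s t \<ge> r}"
    proof (intro Collect_cong conj_cong refl)
      fix t assume "t \<in> {A..B}"
      then have "m_fun h s t = m_fun h' s t" using s by (intro m_fun_cong assms) auto
      then show "(r \<le> m_fun h s t) = (r \<le> m_fun h' s t)" by simp
    qed
    then show ?thesis unfolding sigma_on_def by simp
  qed
  have "Z_inner \<beta> h A B s = Z_inner \<beta> h' A B s" if "s \<in> {A..B}" for s
    unfolding Z_inner_def sigma_pow_def using sigma_eq[OF that] assms(1)[OF that] by simp
  then show ?thesis unfolding Z_on_def using assms(2)
    by (intro lbint_cong) (auto simp: min_def max_def split: if_splits)
qed

lemma level_component_affine:
  assumes L: "L > 0" and c: "c > 0" and s: "s \<in> {A..B}"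
  shows "level_component (\<lambda>x. c * h ((x - d) / L)) (L * A + d) (L * B + d) r (L * s + d)
       = (\<lambda>x. L * x + d) ` level_component h A B (r / c) s"
proof -
  let ?h' = "\<lambda>x. c * h ((x - d) / L)"
  have mm: "{min (L * s + d) (L * t + d)..max (L * s + d) (L * t + d)} = (\<lambda>x. L * x + d) ` {min s t..max s t}" for t
  proof -
    have "(\<lambda>x. L * x + d) ` {min s t..max s t} = {L * min s t + d..L * max s t + d}"
      using L by (subst image_affinity_atLeastAtMost) (auto simp: field_simps)
    moreover have "L * min s t + d = min (L * s + d) (L * t + d)" "L * max s t + d = max (L * s + d) (L * t + d)"
      using L by (auto simp: min_def max_def)
    ultimately show ?thesis by simp
  qed
  have key: "(\<forall>u\<in>{min (L * s + d) (L * t + d)..max (L * s + d) (L * t + d)}. r \<le> ?h' u)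
           \<longleftrightarrow> (\<forall>u\<in>{min s t..max s t}. r / c \<le> h u)" for t
    unfolding mm using L c by (auto simp: field_simps)
  have mem: "(L * t + d \<in> level_component ?h' (L * A + d) (L * B + d) r (L * s + d)) \<longleftrightarrow> (t \<in> level_component h A B (r / c) s)" for t
  proof -
    have i: "(L * t + d \<in> {L * A + d..L * B + d}) \<longleftrightarrow> (t \<in> {A..B})" using L by auto
    show ?thesis unfolding level_component_def mem_Collect_eq i key ..
  qed
  show ?thesis
  proof (intro set_eqI iffI)
    fix y assume y: "y \<in> level_component ?h' (L * A + d) (L * B + d) r (L * s + d)"
    define t where "t = (y - d) / L"
    have yt: "y = L * t + d" unfolding t_def using L by simp
    then show "y \<in> (\<lambda>x. L * x + d) ` level_component h A B (r / c) s" using y mem[of t] by auto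
  next
    fix y assume "y \<in> (\<lambda>x. L * x + d) ` level_component h A B (r / c) s"
    then obtain t where t: "t \<in> level_component h A B (r / c) s" "y = L * t + d" by auto
    then show "y \<in> level_component ?h' (L * A + d) (L * B + d) r (L * s + d)" using mem[of t] by simp
  qed
qed

lemma continuous_on_affine_rescale:
  fixes h :: "real \<Rightarrow> real"
  assumes "continuous_on {A..B} h" "L > 0"
  shows "continuous_on {L * A + d..L * B + d} (\<lambda>x. c * h ((x - d) / L))"
proof -
  have "continuous_on {L * A + d..L * B + d} (\<lambda>x. (x - d) / L)"
    by (intro continuous_on_divide continuous_on_diff continuous_on_id continuous_on_const) (use assms in auto)
  moreover have "(\<lambda>x. (x - d) / L) ` {L * A + d..L * B + d} \<subseteq> {A..B}"
    using assms(2) by (auto simp: field_simps)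
  ultimately have "continuous_on {L * A + d..L * B + d} (\<lambda>x. h ((x - d) / L))"
    using continuous_on_compose2[OF assms(1)] by blast
  then show ?thesis by (intro continuous_intros)
qed

lemma Z_inner_affine:
  assumes h: "continuous_on {A..B} h" and L: "L > 0" and c: "c > 0" and s: "s \<in> {A..B}"
  shows "Z_inner \<beta> (\<lambda>x. c * h ((x - d) / L)) (L * A + d) (L * B + d) (L * s + d)
       = c * rpow L (\<beta> - 1) * Z_inner \<beta> h A B s"
proof -
  let ?h' = "\<lambda>x. c * h ((x - d) / L)"
  have h': "continuous_on {L * A + d..L * B + d} ?h'" by (rule continuous_on_affine_rescale[OF h L])
  have s': "L * s + d \<in> {L * A + d..L * B + d}" using s L by (auto intro: mult_left_mono)
  have GGe: "sigma_pow \<beta> ?h' (L * A + d) (L * B + d) (L * s + d) r = rpow L (\<beta> - 1) * sigma_pow \<beta> h A B s (r / c)" for r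
  proof -
    have "sigma_on ?h' (L * A + d) (L * B + d) r (L * s + d) = measure lborel ((\<lambda>x. L * x + d) ` level_component h A B (r / c) s)"
      unfolding sigma_on_eq_measure[OF h' s'] level_component_affine[OF L c s] ..
    also have "\<dots> = L * sigma_on h A B (r / c) s"
      unfolding sigma_on_eq_measure[OF h s] by (rule measure_lborel_affine_image[OF is_interval_level_component bounded_level_component L])
    finally show ?thesis unfolding sigma_pow_def by (simp add: rpow_mult)
  qed
  have "Z_inner \<beta> ?h' (L * A + d) (L * B + d) (L * s + d)
      = (LBINT r=ereal 0..ereal (c * h s). rpow L (\<beta> - 1) * sigma_pow \<beta> h A B s (r / c))"
    unfolding Z_inner_def GGe using L by simp
  also have "\<dots> = c * (LBINT y=ereal 0..ereal (h s). rpow L (\<beta> - 1) * sigma_pow \<beta> h A B s ((0 + c * y) / c))"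
    using lbint_affine_subst[OF c, of 0 "c * h s" _ 0] c by simp
  also have "\<dots> = c * rpow L (\<beta> - 1) * Z_inner \<beta> h A B s"
    unfolding Z_inner_def using c by simp
  finally show ?thesis .
qed

lemma Z_on_affine:
  assumes h: "continuous_on {A..B} h" and L: "L > 0" and c: "c > 0" and AB: "A \<le> B"
  shows "Z_on \<beta> (\<lambda>x. c * h ((x - d) / L)) (L * A + d) (L * B + d) = L * (c * rpow L (\<beta> - 1)) * Z_on \<beta> h A B"
proof -
  let ?h' = "\<lambda>x. c * h ((x - d) / L)"
  have "Z_on \<beta> ?h' (L * A + d) (L * B + d)
      = L * (LBINT s=ereal A..ereal B. Z_inner \<beta> ?h' (L * A + d) (L * B + d) (d + L * s))"
    unfolding Z_on_def using lbint_affine_subst[OF L, of "L * A + d" "L * B + d" _ d] L by simp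
  also have "\<dots> = L * (LBINT s=ereal A..ereal B. c * rpow L (\<beta> - 1) * Z_inner \<beta> h A B s)"
    using Z_inner_affine[OF h L c] AB by (intro arg_cong[where f="\<lambda>x. L * x"] lbint_cong) (auto simp: add.commute min_def max_def)
  also have "\<dots> = L * (c * rpow L (\<beta> - 1)) * Z_on \<beta> h A B"
    unfolding Z_on_def by simp
  finally show ?thesis .
qed

lemma Z_inner_restrict:
  assumes h: "continuous_on {A..B} h" and sub: "A \<le> A'" "B' \<le> B" and s: "s \<in> {A'..B'}"
    and hs: "0 \<le> h s" and hM: "h M \<le> 0"
    and sep: "\<And>t. t \<in> {A..B} \<Longrightarrow> t \<notin> {A'..B'} \<Longrightarrow> M \<in> {min s t..max s t}"
  shows "Z_inner \<beta> h A B s = Z_inner \<beta> h A' B' s"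
proof -
  have h': "continuous_on {A'..B'} h" using continuous_on_subset[OF h] sub by auto
  have sAB: "s \<in> {A..B}" using s sub by auto
  have "level_component h A B r s = level_component h A' B' r s" if r: "0 < r" for r
  proof (intro set_eqI iffI)
    fix t assume t: "t \<in> level_component h A B r s"
    have "t \<in> {A'..B'}"
    proof (rule ccontr)
      assume "t \<notin> {A'..B'}"
      then have "M \<in> {min s t..max s t}" using t sep by (auto simp: level_component_def)
      then have "r \<le> h M" using t by (auto simp: level_component_def)
      then show False using r hM by simp
    qed
    then show "t \<in> level_component h A' B' r s" using t by (auto simp: level_component_def)
  qed (use sub in \<open>auto simp: level_component_def\<close>)
  then have "sigma_pow \<beta> h A B s r = sigma_pow \<beta> h A' B' s r" if "0 < r" for r
    using that unfolding sigma_pow_def sigma_on_eq_measure[OF h sAB] sigma_on_eq_measure[OF h' s] by simp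
  then show ?thesis unfolding Z_inner_def using hs by (intro lbint_cong) (auto simp: min_def max_def)
qed

lemma Z_on_split_at_zero:
  assumes h: "continuous_on {A..B} h" and nn: "\<And>x. x \<in> {A..B} \<Longrightarrow> 0 \<le> h x"
    and M: "A \<le> M" "M \<le> B" "h M = 0" and \<beta>: "\<beta> \<ge> 1"
  shows "Z_on \<beta> h A B = Z_on \<beta> h A M + Z_on \<beta> h M B"
proof -
  have ic: "continuous_on {A..B} (Z_inner \<beta> h A B)" by (rule continuous_on_Z_inner[OF h \<beta>])
  have "Z_on \<beta> h A B = (LBINT s=ereal A..ereal M. Z_inner \<beta> h A B s) + (LBINT s=ereal M..ereal B. Z_inner \<beta> h A B s)"
    unfolding Z_on_def
    by (rule interval_integral_sum[symmetric])
       (use M interval_integrable_continuous_on[OF _ ic] in \<open>auto simp: min_def max_def\<close>)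
  also have "(LBINT s=ereal A..ereal M. Z_inner \<beta> h A B s) = Z_on \<beta> h A M"
    unfolding Z_on_def using M nn
    by (intro lbint_cong Z_inner_restrict[OF h, where M=M]) (auto simp: min_def max_def)
  also have "(LBINT s=ereal M..ereal B. Z_inner \<beta> h A B s) = Z_on \<beta> h M B"
    unfolding Z_on_def using M nn
    by (intro lbint_cong Z_inner_restrict[OF h, where M=M]) (auto simp: min_def max_def)
  finally show ?thesis .
qed

lemma Z_on_zero:
  assumes "\<And>x. x \<in> {A..B} \<Longrightarrow> h x = 0" "A \<le> B"
  shows "Z_on \<beta> h A B = 0"
proof -
  have "Z_inner \<beta> h A B s = 0" if "s \<in> {A..B}" for s unfolding Z_inner_def using assms(1)[OF that] by simp
  then have "Z_on \<beta> h A B = (LBINT s=ereal A..ereal B. 0)"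
    unfolding Z_on_def using assms(2) by (intro lbint_cong) (auto simp: min_def max_def split: if_splits)
  then show ?thesis by simp
qed

text \<open>g is the contour of a tree whose root has a single child, c the contour of the subtree
  of that child.\<close>

context
  fixes c g :: "real \<Rightarrow> real" and K \<beta> :: real
  assumes K: "K \<ge> 0" and \<beta>: "\<beta> \<ge> 1"
    and cc: "continuous_on {0..K} c" and cn: "\<And>x. x \<in> {0..K} \<Longrightarrow> 0 \<le> c x"
    and gc: "continuous_on {0..K+2} g"
    and g1: "\<And>x. x \<in> {0..1} \<Longrightarrow> g x = x"
    and g2: "\<And>x. x \<in> {1..K+1} \<Longrightarrow> g x = 1 + c (x - 1)"
    and g3: "\<And>x. x \<in> {K+1..K+2} \<Longrightarrow> g x = K + 2 - x"
begin

lemma excursion_ge_iff: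
  assumes u: "u \<in> {0..K+2}" and r: "0 \<le> r" "r \<le> 1"
  shows "r \<le> g u \<longleftrightarrow> u \<in> {r..K+2-r}"
proof -
  consider "u \<in> {0..1}" | "u \<in> {1..K+1}" | "u \<in> {K+1..K+2}" using u by fastforce
  then show ?thesis
  proof cases
    case 1 then show ?thesis using g1[OF 1] r K by auto
  next
    case 2
    have "0 \<le> c (u - 1)" using 2 by (intro cn) auto
    then show ?thesis using g2[OF 2] 2 r K by auto
  next
    case 3 then show ?thesis using g3[OF 3] r K by auto
  qed
qed

lemma excursion_nonneg: "u \<in> {0..K+2} \<Longrightarrow> 0 \<le> g u"
  using excursion_ge_iff[of u 0] by auto

lemma excursion_le_1: "u \<in> {0..K+2} \<Longrightarrow> u \<notin> {1<..<K+1} \<Longrightarrow> g u \<le> 1"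
proof -
  assume u: "u \<in> {0..K+2}" "u \<notin> {1<..<K+1}"
  then consider "u \<in> {0..1}" | "u \<in> {K+1..K+2}" by fastforce
  then show "g u \<le> 1" by cases (use g1 g3 in auto)
qed

lemma level_component_low:
  assumes s: "s \<in> {0..K+2}" and r: "0 \<le> r" "r \<le> 1" "r \<le> g s"
  shows "level_component g 0 (K+2) r s = {r..K+2-r}"
proof -
  have sI: "s \<in> {r..K+2-r}" using excursion_ge_iff[OF s r(1,2)] r(3) by simp
  show ?thesis
  proof (intro set_eqI iffI)
    fix t assume t: "t \<in> level_component g 0 (K+2) r s"
    then have "t \<in> {0..K+2}" "r \<le> g t" by (auto simp: level_component_def)
    then show "t \<in> {r..K+2-r}" using excursion_ge_iff r by blast
  next
    fix t assume t: "t \<in> {r..K+2-r}"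
    have "r \<le> g u" if "u \<in> {min s t..max s t}" for u
    proof -
      have "u \<in> {r..K+2-r}" using that sI t by auto
      moreover have "u \<in> {0..K+2}" using \<open>u \<in> {r..K+2-r}\<close> r by auto
      ultimately show ?thesis using excursion_ge_iff r by blast
    qed
    moreover have "t \<in> {0..K+2}" using t r by auto
    ultimately show "t \<in> level_component g 0 (K+2) r s" by (auto simp: level_component_def)
  qed
qed

lemma sigma_pow_low:
  assumes s: "s \<in> {0..K+2}" and r: "0 \<le> r" "r \<le> 1" "r \<le> g s"
  shows "rpow K (\<beta> - 1) \<le> sigma_pow \<beta> g 0 (K+2) s r \<and> sigma_pow \<beta> g 0 (K+2) s r \<le> rpow (K+2) (\<beta> - 1)"
proof -
  have "sigma_pow \<beta> g 0 (K+2) s r = rpow (K + 2 - 2 * r) (\<beta> - 1)"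
    unfolding sigma_pow_def sigma_on_eq_measure[OF gc s] level_component_low[OF s r] using r K by simp
  then show ?thesis using r K \<beta> by (auto intro!: rpow_mono)
qed

lemma level_component_high:
  assumes s: "s \<in> {1..K+1}" and r: "1 < r"
  shows "level_component g 0 (K+2) r s = (\<lambda>x. x + 1) ` level_component c 0 K (r - 1) (s - 1)"
proof (intro set_eqI iffI)
  fix t assume t: "t \<in> level_component g 0 (K+2) r s"
  then have tI: "t \<in> {0..K+2}" and all: "\<And>u. u \<in> {min s t..max s t} \<Longrightarrow> r \<le> g u" by (auto simp: level_component_def)
  have inmid: "u \<in> {1..K+1}" if "u \<in> {min s t..max s t}" for u
  proof (rule ccontr)
    assume "u \<notin> {1..K+1}"
    moreover have "u \<in> {0..K+2}" using that s tI by auto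
    ultimately have "g u \<le> 1" using excursion_le_1 by auto
    then show False using all[OF that] r by simp
  qed
  have t1: "t \<in> {1..K+1}" using inmid[of t] by auto
  have "t - 1 \<in> level_component c 0 K (r - 1) (s - 1)"
  proof -
    have "r - 1 \<le> c v" if v: "v \<in> {min (s - 1) (t - 1)..max (s - 1) (t - 1)}" for v
    proof -
      have "v + 1 \<in> {min s t..max s t}" using v by auto
      then show ?thesis using all[of "v + 1"] g2[OF inmid[OF \<open>v + 1 \<in> _\<close>]] by simp
    qed
    then show ?thesis using t1 by (auto simp: level_component_def)
  qed
  then show "t \<in> (\<lambda>x. x + 1) ` level_component c 0 K (r - 1) (s - 1)" by (intro image_eqI[of _ _ "t - 1"]) auto
next
  fix t assume "t \<in> (\<lambda>x. x + 1) ` level_component c 0 K (r - 1) (s - 1)"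
  then obtain x where x: "x \<in> level_component c 0 K (r - 1) (s - 1)" "t = x + 1" by auto
  then have xI: "x \<in> {0..K}" and all: "\<And>v. v \<in> {min (s - 1) x..max (s - 1) x} \<Longrightarrow> r - 1 \<le> c v"
    by (auto simp: level_component_def)
  have "r \<le> g u" if u: "u \<in> {min s t..max s t}" for u
  proof -
    have "u - 1 \<in> {min (s - 1) x..max (s - 1) x}" using u x(2) by auto
    moreover have "u \<in> {1..K+1}" using u x(2) xI s by auto
    ultimately show ?thesis using all[of "u - 1"] g2[of u] by simp
  qed
  moreover have "t \<in> {0..K+2}" using xI x(2) by auto
  ultimately show "t \<in> level_component g 0 (K+2) r s" by (auto simp: level_component_def)
qed

lemma sigma_pow_high:
  assumes s: "s \<in> {1..K+1}" and r: "1 < r"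
  shows "sigma_pow \<beta> g 0 (K+2) s r = sigma_pow \<beta> c 0 K (s - 1) (r - 1)"
proof -
  have s2: "s \<in> {0..K+2}" and s1: "s - 1 \<in> {0..K}" using s by auto
  have "measure lborel ((\<lambda>x. x + 1) ` level_component c 0 K (r - 1) (s - 1))
      = measure lborel (level_component c 0 K (r - 1) (s - 1))"
    using measure_lborel_affine_image[OF is_interval_level_component bounded_level_component, of 1] by simp
  then show ?thesis
    unfolding sigma_pow_def sigma_on_eq_measure[OF gc s2] sigma_on_eq_measure[OF cc s1] level_component_high[OF s r]
    by simp
qed

definition base_layer :: "real \<Rightarrow> real" where
  "base_layer s = (LBINT r=ereal 0..ereal (min (g s) 1). sigma_pow \<beta> g 0 (K+2) s r)"

lemma locally_integrable_excursion: "s \<in> {0..K+2} \<Longrightarrow> locally_integrable (sigma_pow \<beta> g 0 (K+2) s)"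
  using sigma_pow_antimono_bounded[OF gc _ \<beta>]
  by (intro locally_integrable_antimono[where M="rpow (K+2) (\<beta> - 1)"]) (auto simp: abs_le_iff)

lemma base_layer_bounds:
  assumes s: "s \<in> {0..K+2}"
  shows "min (g s) 1 * rpow K (\<beta> - 1) \<le> base_layer s" "base_layer s \<le> rpow (K+2) (\<beta> - 1)"
proof -
  have m: "0 \<le> min (g s) 1" using excursion_nonneg[OF s] by simp
  have b: "rpow K (\<beta> - 1) \<le> sigma_pow \<beta> g 0 (K+2) s r \<and> sigma_pow \<beta> g 0 (K+2) s r \<le> rpow (K+2) (\<beta> - 1)"
    if "0 \<le> r" "r \<le> min (g s) 1" for r using sigma_pow_low[OF s] that by auto
  note lb = lbint_bounds[OF m locally_integrable_excursion[OF s] b]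
  show "min (g s) 1 * rpow K (\<beta> - 1) \<le> base_layer s" using lb(1) unfolding base_layer_def by simp
  have "min (g s) 1 * rpow (K+2) (\<beta> - 1) \<le> rpow (K+2) (\<beta> - 1)"
    by (rule mult_left_le_one_le) (use K m in \<open>auto simp: rpow_nonneg\<close>)
  then show "base_layer s \<le> rpow (K+2) (\<beta> - 1)" using lb(2) unfolding base_layer_def by auto
qed

lemma Z_inner_excursion_side:
  assumes s: "s \<in> {0..K+2}" "s \<notin> {1<..<K+1}"
  shows "Z_inner \<beta> g 0 (K+2) s = base_layer s"
  unfolding Z_inner_def base_layer_def using excursion_le_1[OF s] by simp

lemma Z_inner_excursion_mid:
  assumes s: "s \<in> {1..K+1}"
  shows "Z_inner \<beta> g 0 (K+2) s = base_layer s + Z_inner \<beta> c 0 K (s - 1)"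
proof -
  have s2: "s \<in> {0..K+2}" using s by auto
  have gs: "g s = 1 + c (s - 1)" by (rule g2[OF s])
  have c0: "0 \<le> c (s - 1)" using s by (intro cn) auto
  have "Z_inner \<beta> g 0 (K+2) s = (LBINT r=ereal 0..ereal 1. sigma_pow \<beta> g 0 (K+2) s r) + (LBINT r=ereal 1..ereal (g s). sigma_pow \<beta> g 0 (K+2) s r)"
    unfolding Z_inner_def using lbint_sum[OF locally_integrable_excursion[OF s2], where a=0 and b=1 and c="g s"] by simp
  also have "(LBINT r=ereal 0..ereal 1. sigma_pow \<beta> g 0 (K+2) s r) = base_layer s"
    unfolding base_layer_def using gs c0 by (simp add: min_def)
  also have "(LBINT r=ereal 1..ereal (g s). sigma_pow \<beta> g 0 (K+2) s r) = (LBINT y=ereal 0..ereal (c (s - 1)). sigma_pow \<beta> g 0 (K+2) s (y + 1))"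
    using lbint_shift[where f="sigma_pow \<beta> g 0 (K+2) s" and a=0 and b="c (s - 1)" and d=1] gs by (simp add: add.commute)
  also have "\<dots> = Z_inner \<beta> c 0 K (s - 1)"
    unfolding Z_inner_def using c0 by (intro lbint_cong) (auto simp: sigma_pow_high[OF s] min_def max_def)
  finally show ?thesis .
qed

lemma Z_inner_excursion_side_bounds:
  assumes s: "s \<in> {0..K+2}" "s \<notin> {1<..<K+1}"
  shows "0 \<le> Z_inner \<beta> g 0 (K+2) s \<and> Z_inner \<beta> g 0 (K+2) s \<le> rpow (K+2) (\<beta> - 1)"
proof -
  have "0 \<le> min (g s) 1 * rpow K (\<beta> - 1)" using excursion_nonneg[OF s(1)] K by (simp add: rpow_nonneg)
  then show ?thesis using base_layer_bounds[OF s(1)] Z_inner_excursion_side[OF s] by simp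
qed

lemma Z_inner_excursion_mid_bounds:
  assumes s: "s \<in> {1..K+1}"
  shows "rpow K (\<beta> - 1) \<le> Z_inner \<beta> g 0 (K+2) s - Z_inner \<beta> c 0 K (s - 1)
    \<and> Z_inner \<beta> g 0 (K+2) s - Z_inner \<beta> c 0 K (s - 1) \<le> rpow (K+2) (\<beta> - 1)"
proof -
  have "min (g s) 1 = 1" using g2[OF s] cn[of "s - 1"] s by auto
  then show ?thesis using base_layer_bounds[of s] Z_inner_excursion_mid[OF s] s by simp
qed

lemma Z_on_excursion_bounds:
  shows "Z_on \<beta> c 0 K + K * rpow K (\<beta> - 1) \<le> Z_on \<beta> g 0 (K+2)"
    "Z_on \<beta> g 0 (K+2) \<le> Z_on \<beta> c 0 K + (K+2) * rpow (K+2) (\<beta> - 1)"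
proof -
  let ?I = "Z_inner \<beta> g 0 (K+2)" and ?Ic = "\<lambda>s. Z_inner \<beta> c 0 K (s - 1)"
  have ic: "continuous_on {0..K+2} ?I" by (rule continuous_on_Z_inner[OF gc \<beta>])
  have icc: "continuous_on {1..K+1} ?Ic"
    by (rule continuous_on_compose2[OF continuous_on_Z_inner[OF cc \<beta>]]) (auto intro: continuous_intros)
  define side where "side = (LBINT s=ereal 0..ereal 1. ?I s) + (LBINT s=ereal (K+1)..ereal (K+2). ?I s)"
  define mid where "mid = (LBINT s=ereal 1..ereal (K+1). ?I s - ?Ic s)"
  have "Z_on \<beta> g 0 (K+2) = (LBINT s=ereal 0..ereal 1. ?I s) + (LBINT s=ereal 1..ereal (K+1). ?I s)
      + (LBINT s=ereal (K+1)..ereal (K+2). ?I s)"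
    unfolding Z_on_def
    using lbint_sum_cont[of 0 1 "K+1" ?I] lbint_sum_cont[of 0 "K+1" "K+2" ?I] continuous_on_subset[OF ic] K
    by auto
  also have "(LBINT s=ereal 1..ereal (K+1). ?I s) = mid + (LBINT s=ereal 1..ereal (K+1). ?Ic s)"
    unfolding mid_def using continuous_on_subset[OF ic] icc K by (subst lbint_diff_cont) auto
  also have "(LBINT s=ereal 1..ereal (K+1). ?Ic s) = Z_on \<beta> c 0 K"
    unfolding Z_on_def using lbint_shift[where f="Z_inner \<beta> c 0 K" and a=1 and b="K+1" and d="-1"] by simp
  finally have split: "Z_on \<beta> g 0 (K+2) = Z_on \<beta> c 0 K + mid + side" unfolding side_def by simp
  have piece: "0 \<le> (LBINT s=ereal a..ereal (a + 1). ?I s) \<and> (LBINT s=ereal a..ereal (a + 1). ?I s) \<le> rpow (K+2) (\<beta> - 1)"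
    if "\<And>x. a \<le> x \<Longrightarrow> x \<le> a + 1 \<Longrightarrow> x \<in> {0..K+2} \<and> x \<notin> {1<..<K+1}" for a
  proof -
    have "{a..a + 1} \<subseteq> {0..K+2}" using that by auto
    then have "continuous_on {a..a + 1} ?I" by (rule continuous_on_subset[OF ic])
    from lbint_bounds_cont[OF _ this, of 0 "rpow (K+2) (\<beta> - 1)"]
    show ?thesis using that Z_inner_excursion_side_bounds by auto
  qed
  have "0 \<le> side \<and> side \<le> 2 * rpow (K+2) (\<beta> - 1)"
    using piece[of 0] piece[of "K+1"] K unfolding side_def by (auto simp: add.commute)
  moreover have "K * rpow K (\<beta> - 1) \<le> mid \<and> mid \<le> K * rpow (K+2) (\<beta> - 1)"
    using lbint_bounds_cont[OF _ continuous_on_diff[OF continuous_on_subset[OF ic] icc],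
        of "rpow K (\<beta> - 1)" "rpow (K+2) (\<beta> - 1)"] Z_inner_excursion_mid_bounds K
    unfolding mid_def by auto
  ultimately show "Z_on \<beta> c 0 K + K * rpow K (\<beta> - 1) \<le> Z_on \<beta> g 0 (K+2)"
    "Z_on \<beta> g 0 (K+2) \<le> Z_on \<beta> c 0 K + (K+2) * rpow (K+2) (\<beta> - 1)"
    unfolding split by (simp_all add: algebra_simps)
qed

end

lemma tsize_pos: "tsize t \<ge> 1"
  by (cases t) simp

lemma length_contour_seq: "length (contour_seq t) = 2 * tsize t - 1"
proof (induction t)
  case (Node ts)
  have "length (contour_seq (Node ts)) = 1 + (\<Sum>s\<leftarrow>ts. length (contour_seq s) + 1)"
    by (simp add: length_concat comp_def)
  also have "(\<Sum>s\<leftarrow>ts. length (contour_seq s) + 1) = (\<Sum>s\<leftarrow>ts. 2 * tsize s)"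
  proof (rule arg_cong[where f=sum_list], rule map_cong[OF refl])
    fix s assume "s \<in> set ts"
    then show "length (contour_seq s) + 1 = 2 * tsize s" using Node tsize_pos[of s] by simp
  qed
  also have "\<dots> = 2 * (\<Sum>s\<leftarrow>ts. tsize s)" by (simp add: sum_list_const_mult)
  finally show ?case by simp
qed

lemma contour_seq_Cons: "contour_seq (Node (s # ts)) = (0 # map Suc (contour_seq s)) @ contour_seq (Node ts)"
  by simp

lemma contour_seq_nonempty: "contour_seq t \<noteq> []"
  by (cases t) simp

lemma contour_seq_first: "contour_seq t ! 0 = 0"
  by (cases t) simp

lemma contour_seq_last: "contour_seq t ! (length (contour_seq t) - 1) = 0"
proof (cases t)
  case (Node ts)
  then show ?thesis
  proof (induction ts arbitrary: t)
    case Nil then show ?case by simp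
  next
    case (Cons s ts)
    have "contour_seq (Node (s # ts)) ! (length (contour_seq (Node (s # ts))) - 1)
        = contour_seq (Node ts) ! (length (contour_seq (Node ts)) - 1)"
      using contour_seq_nonempty[of "Node ts"] by (simp only: contour_seq_Cons) (simp add: nth_append)
    then show ?case using Cons by simp
  qed
qed

definition lin_interp :: "(int \<Rightarrow> real) \<Rightarrow> real \<Rightarrow> real" where
  "lin_interp f x = (1 - (x - of_int \<lfloor>x\<rfloor>)) * f \<lfloor>x\<rfloor> + (x - of_int \<lfloor>x\<rfloor>) * f (\<lfloor>x\<rfloor> + 1)"

lemma contour_eq_lin_interp: "contour t = lin_interp (contour_at t)"
  unfolding contour_def lin_interp_def by (rule ext) simp

lemma lin_interp_affine:
  assumes "of_int k \<le> x" "x \<le> of_int k + 1"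
  shows "lin_interp f x = f k + (x - of_int k) * (f (k + 1) - f k)"
proof (cases "x = of_int k + 1")
  case True
  then have "\<lfloor>x\<rfloor> = k + 1" by simp
  then show ?thesis unfolding lin_interp_def using True by (simp add: algebra_simps)
next
  case False
  then have "\<lfloor>x\<rfloor> = k" using assms by (intro floor_unique) auto
  then show ?thesis unfolding lin_interp_def by (simp add: algebra_simps)
qed

lemma lin_interp_int: "lin_interp f (of_int k) = f k"
  unfolding lin_interp_def by simp

lemma lin_interp_shift:
  assumes eq: "\<And>k. Ka \<le> k \<Longrightarrow> k \<le> Kb \<Longrightarrow> f k = \<alpha> + f' (k - d)"
    and x: "of_int Ka \<le> x" "x \<le> of_int Kb"
  shows "lin_interp f x = \<alpha> + lin_interp f' (x - of_int d)"
proof -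
  define k where "k = \<lfloor>x\<rfloor>"
  have k1: "Ka \<le> k" unfolding k_def using x by (simp add: le_floor_iff)
  have k2: "k \<le> Kb" unfolding k_def using x by (simp add: floor_le_iff)
  have kx: "of_int k \<le> x" "x < of_int k + 1" unfolding k_def by linarith+
  have fl: "\<lfloor>x - of_int d\<rfloor> = k - d" using kx by (intro floor_unique) auto
  show ?thesis
  proof (cases "k = Kb")
    case True
    then have "x = of_int k" using x kx by linarith
    then show ?thesis using eq[OF k1 k2] lin_interp_int[of f' "k - d"] lin_interp_int[of f k] by simp
  next
    case False
    then have "k + 1 \<le> Kb" using k2 by simp
    then have "f (k + 1) = \<alpha> + f' (k + 1 - d)" using k1 by (intro eq) auto
    moreover have "f k = \<alpha> + f' (k - d)" by (rule eq[OF k1 k2])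
    ultimately show ?thesis unfolding lin_interp_def k_def[symmetric] fl
      by (simp add: algebra_simps)
  qed
qed

lemma continuous_on_lin_interp: "continuous_on UNIV (lin_interp f)"
proof -
  have lin: "continuous_on {of_int k..of_int k + 1} (lin_interp f)" for k
  proof -
    have "continuous_on {of_int k..of_int k + 1} (\<lambda>x. f k + (x - of_int k) * (f (k + 1) - f k))"
      by (intro continuous_intros)
    then show ?thesis by (rule continuous_on_eq) (auto simp: lin_interp_affine)
  qed
  have "isCont (lin_interp f) x" for x
  proof -
    define k where "k = \<lfloor>x\<rfloor>"
    have "continuous_on ({of_int (k - 1)..of_int (k - 1) + 1} \<union> {of_int k..of_int k + 1}) (lin_interp f)"
      by (intro continuous_on_closed_Un lin) auto
    moreover have "{of_int (k - 1)..of_int (k - 1) + 1} \<union> {of_int k..of_int k + 1} = {real_of_int k - 1..real_of_int k + 1}"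
      by auto
    ultimately have c: "continuous_on {real_of_int k - 1..real_of_int k + 1} (lin_interp f)" by simp
    have "of_int k \<le> x" "x < of_int k + 1" unfolding k_def by linarith+
    then have "x \<in> {real_of_int k - 1<..<real_of_int k + 1}" by auto
    then show ?thesis
      using continuous_on_interior[OF c] by (metis interior_atLeastAtMost_real continuous_on_eq_continuous_at open_greaterThanLessThan c continuous_on_subset greaterThanLessThan_subseteq_atLeastAtMost_iff order_refl)
  qed
  then show ?thesis by (simp add: continuous_at_imp_continuous_on)
qed

lemma lin_interp_bounds:
  assumes "\<And>k. m \<le> f k \<and> f k \<le> M"
  shows "m \<le> lin_interp f x \<and> lin_interp f x \<le> M"
proof -
  define \<theta> where "\<theta> = x - of_int \<lfloor>x\<rfloor>"
  have t: "0 \<le> \<theta>" "\<theta> \<le> 1" unfolding \<theta>_def by linarith+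
  have "lin_interp f x = (1 - \<theta>) * f \<lfloor>x\<rfloor> + \<theta> * f (\<lfloor>x\<rfloor> + 1)" unfolding lin_interp_def \<theta>_def ..
  moreover have "(1 - \<theta>) * m \<le> (1 - \<theta>) * f \<lfloor>x\<rfloor>" "\<theta> * m \<le> \<theta> * f (\<lfloor>x\<rfloor> + 1)"
    "(1 - \<theta>) * f \<lfloor>x\<rfloor> \<le> (1 - \<theta>) * M" "\<theta> * f (\<lfloor>x\<rfloor> + 1) \<le> \<theta> * M"
    using assms t by (auto intro: mult_left_mono)
  ultimately show ?thesis by (simp add: algebra_simps)
qed

lemma contour_at_nonneg: "0 \<le> contour_at t k"
  unfolding contour_at_def by auto

lemma contour_at_bound: "contour_at t k \<le> real (sum_list (contour_seq t))"
  unfolding contour_at_def using member_le_sum_list[of _ "contour_seq t"] by auto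

lemma contour_at_0: "contour_at t 0 = 0"
  unfolding contour_at_def using contour_seq_first by simp

lemma contour_at_out: "k \<ge> 2 * int (tsize t) - 1 \<Longrightarrow> contour_at t k = 0"
  unfolding contour_at_def using length_contour_seq[of t] tsize_pos[of t] by auto

lemma contour_at_last: "contour_at t (2 * int (tsize t) - 2) = 0"
proof -
  have "nat (2 * int (tsize t) - 2) = length (contour_seq t) - 1" using length_contour_seq[of t] tsize_pos[of t] by simp
  then show ?thesis unfolding contour_at_def using contour_seq_last[of t] length_contour_seq[of t] tsize_pos[of t] by simp
qed

lemma contour_at_Cons_right:
  assumes "k \<ge> 2 * int (tsize s)"
  shows "contour_at (Node (s # ts)) k = contour_at (Node ts) (k - 2 * int (tsize s))"
proof -
  have len: "length (0 # map Suc (contour_seq s)) = 2 * tsize s" using length_contour_seq[of s] tsize_pos[of s] by simp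
  have k0: "0 \<le> k" using assms by simp
  have nk: "nat k = 2 * tsize s + nat (k - 2 * int (tsize s))" using assms by simp
  show ?thesis unfolding contour_at_def contour_seq_Cons
    using assms len by (auto simp: nk nth_append_length_plus nth_append)
qed

lemma contour_at_Cons_mid:
  assumes "1 \<le> k" "k \<le> 2 * int (tsize s) - 1"
  shows "contour_at (Node (s # ts)) k = 1 + contour_at s (k - 1)"
proof -
  have len: "length (contour_seq s) = 2 * tsize s - 1" by (rule length_contour_seq)
  have pos: "tsize s \<ge> 1" by (rule tsize_pos)
  have i: "nat k - 1 < length (contour_seq s)" using assms len pos by linarith
  have i2: "nat k < length (0 # map Suc (contour_seq s))" using i by simp
  have nk: "nat (k - 1) = nat k - 1" using assms by simp
  have "contour_seq (Node (s # ts)) ! nat k = (0 # map Suc (contour_seq s)) ! nat k"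
    unfolding contour_seq_Cons by (rule nth_append_left[OF i2])
  also have "\<dots> = Suc (contour_seq s ! (nat k - 1))"
    using i assms by (cases "nat k") auto
  finally have e: "contour_seq (Node (s # ts)) ! nat k = Suc (contour_seq s ! (nat k - 1))" .
  have l2: "nat k < length (contour_seq (Node (s # ts)))" using i2 unfolding contour_seq_Cons by simp
  show ?thesis unfolding contour_at_def using assms i l2 e nk by simp
qed

lemma contour_nonneg: "0 \<le> contour t x"
  unfolding contour_eq_lin_interp using lin_interp_bounds[of 0 "contour_at t" "real (sum_list (contour_seq t))"]
    contour_at_nonneg contour_at_bound by blast

lemma contour_bound: "contour t x \<le> real (sum_list (contour_seq t))"
  unfolding contour_eq_lin_interp using lin_interp_bounds[of 0 "contour_at t" "real (sum_list (contour_seq t))"]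
    contour_at_nonneg contour_at_bound by blast

lemma continuous_on_contour: "continuous_on UNIV (contour t)"
  unfolding contour_eq_lin_interp by (rule continuous_on_lin_interp)

lemma contour_tail:
  assumes "x \<ge> 2 * real (tsize t) - 2"
  shows "contour t x = 0"
proof -
  have "lin_interp (contour_at t) x = 0 + lin_interp (\<lambda>_. 0) (x - of_int 0)"
  proof (rule lin_interp_shift[where Ka="2 * int (tsize t) - 2" and Kb="\<lfloor>x\<rfloor> + 1"])
    fix k assume "2 * int (tsize t) - 2 \<le> k" "k \<le> \<lfloor>x\<rfloor> + 1"
    then show "contour_at t k = 0 + 0"
      using contour_at_last[of t] contour_at_out[of t k] by (cases "k = 2 * int (tsize t) - 2") auto
  next
    show "real_of_int (2 * int (tsize t) - 2) \<le> x" using assms by simp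
    show "x \<le> real_of_int (\<lfloor>x\<rfloor> + 1)" by linarith
  qed
  then show ?thesis unfolding contour_eq_lin_interp by (simp add: lin_interp_def)
qed

lemma contour_Cons_right:
  assumes "x \<ge> 2 * real (tsize s)"
  shows "contour (Node (s # ts)) x = contour (Node ts) (x - 2 * real (tsize s))"
proof -
  have "lin_interp (contour_at (Node (s # ts))) x = 0 + lin_interp (contour_at (Node ts)) (x - of_int (2 * int (tsize s)))"
  proof (rule lin_interp_shift[where Ka="2 * int (tsize s)" and Kb="\<lfloor>x\<rfloor> + 1"])
    fix k assume "2 * int (tsize s) \<le> k" "k \<le> \<lfloor>x\<rfloor> + 1"
    then show "contour_at (Node (s # ts)) k = 0 + contour_at (Node ts) (k - 2 * int (tsize s))"
      using contour_at_Cons_right by simp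
  next
    show "real_of_int (2 * int (tsize s)) \<le> x" using assms by simp
    show "x \<le> real_of_int (\<lfloor>x\<rfloor> + 1)" by linarith
  qed
  then show ?thesis unfolding contour_eq_lin_interp by simp
qed

lemma contour_Cons_mid:
  assumes "1 \<le> x" "x \<le> 2 * real (tsize s) - 1"
  shows "contour (Node (s # ts)) x = 1 + contour s (x - 1)"
proof -
  have "lin_interp (contour_at (Node (s # ts))) x = 1 + lin_interp (contour_at s) (x - of_int 1)"
  proof (rule lin_interp_shift[where Ka=1 and Kb="2 * int (tsize s) - 1"])
    fix k :: int assume "1 \<le> k" "k \<le> 2 * int (tsize s) - 1"
    then show "contour_at (Node (s # ts)) k = 1 + contour_at s (k - 1)"
      by (rule contour_at_Cons_mid)
  qed (use assms in auto)
  then show ?thesis unfolding contour_eq_lin_interp by simp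
qed

lemma contour_Cons_left:
  assumes "0 \<le> x" "x \<le> 1"
  shows "contour (Node (s # ts)) x = x"
proof -
  have "lin_interp (contour_at (Node (s # ts))) x = contour_at (Node (s # ts)) 0 + (x - of_int 0) * (contour_at (Node (s # ts)) (0 + 1) - contour_at (Node (s # ts)) 0)"
    by (rule lin_interp_affine) (use assms in auto)
  moreover have "contour_at (Node (s # ts)) 0 = 0" by (rule contour_at_0)
  moreover have "contour_at (Node (s # ts)) 1 = 1"
    using contour_at_Cons_mid[of 1 s ts] tsize_pos[of s] contour_at_0[of s] by simp
  ultimately show ?thesis unfolding contour_eq_lin_interp by simp
qed

lemma contour_Cons_edge:
  assumes "2 * real (tsize s) - 1 \<le> x" "x \<le> 2 * real (tsize s)"
  shows "contour (Node (s # ts)) x = 2 * real (tsize s) - x"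
proof -
  let ?k = "2 * int (tsize s) - 1"
  have "lin_interp (contour_at (Node (s # ts))) x = contour_at (Node (s # ts)) ?k + (x - of_int ?k) * (contour_at (Node (s # ts)) (?k + 1) - contour_at (Node (s # ts)) ?k)"
    by (rule lin_interp_affine) (use assms in auto)
  moreover have "contour_at (Node (s # ts)) ?k = 1"
    using contour_at_Cons_mid[of ?k s ts] tsize_pos[of s] contour_at_last[of s] by (simp add: algebra_simps)
  moreover have "contour_at (Node (s # ts)) (?k + 1) = 0"
    using contour_at_Cons_right[of s "?k + 1" ts] contour_at_0[of "Node ts"] by simp
  ultimately show ?thesis unfolding contour_eq_lin_interp by (simp add: algebra_simps)
qed

lemma contour_zero: "contour t 0 = 0"
  unfolding contour_eq_lin_interp using lin_interp_int[of "contour_at t" 0] contour_at_0 by simp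

lemma continuous_on_clamp01: "continuous_on UNIV clamp01"
  unfolding clamp01_def[abs_def] by (intro continuous_intros)

lemma clamp01_id: "s \<in> {0..1} \<Longrightarrow> clamp01 s = s"
  unfolding clamp01_def by auto

lemma apply_rescaled_contour:
  "apply_bcontfun (rescaled_contour a t) = (\<lambda>s. a / real (tsize t) * contour t (2 * real (tsize t) * clamp01 s))"
proof -
  let ?f = "\<lambda>s. a / real (tsize t) * contour t (2 * real (tsize t) * clamp01 s)"
  have c1: "continuous_on UNIV (\<lambda>s. 2 * real (tsize t) * clamp01 s)"
    by (intro continuous_intros continuous_on_clamp01)
  have "continuous_on UNIV (\<lambda>s. contour t (2 * real (tsize t) * clamp01 s))"
    using continuous_on_compose2[OF continuous_on_contour c1] by simp
  then have c: "continuous_on UNIV ?f" by (intro continuous_intros)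
  have b: "bounded (range ?f)"
    unfolding bounded_iff
  proof (intro exI[of _ "\<bar>a / real (tsize t)\<bar> * real (sum_list (contour_seq t))"] ballI)
    fix y assume "y \<in> range ?f"
    then obtain s where y: "y = ?f s" by auto
    have "\<bar>contour t (2 * real (tsize t) * clamp01 s)\<bar> \<le> real (sum_list (contour_seq t))"
      using contour_nonneg contour_bound by (simp add: abs_le_iff)
    then show "norm y \<le> \<bar>a / real (tsize t)\<bar> * real (sum_list (contour_seq t))"
      unfolding y by (simp add: abs_mult) (intro divide_right_mono mult_left_mono, auto)
  qed
  show ?thesis unfolding rescaled_contour_def
    by (rule Bcontfun_inverse) (use c b in \<open>simp add: bcontfun_def\<close>)
qed

section \<open>The functional of a contour and the subtree sizes\<close>

lemma powr_diff_le:
  fixes x d \<beta> :: real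
  assumes \<beta>: "\<beta> \<ge> 1" and d: "0 \<le> d" "d \<le> x"
  shows "x powr \<beta> - (x - d) powr \<beta> \<le> d * \<beta> * x powr (\<beta> - 1)"
proof -
  consider "d = 0" | "0 < d" "d < x" | "0 < d" "d = x" using d by fastforce
  then show ?thesis
  proof cases
    case 2
    have der: "\<And>y. x - d \<le> y \<Longrightarrow> y \<le> x \<Longrightarrow> DERIV (\<lambda>z. z powr \<beta>) y :> \<beta> * y powr (\<beta> - 1)"
      using 2 by (intro has_real_derivative_powr) auto
    obtain z where z: "x - d < z" "z < x" "x powr \<beta> - (x - d) powr \<beta> = d * (\<beta> * z powr (\<beta> - 1))"
      using MVT2[of "x - d" x "\<lambda>z. z powr \<beta>", OF _ der] 2 by auto
    have "z powr (\<beta> - 1) \<le> x powr (\<beta> - 1)" using z 2 \<beta> by (intro powr_mono2) auto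
    then have "d * (\<beta> * z powr (\<beta> - 1)) \<le> d * (\<beta> * x powr (\<beta> - 1))"
      using d \<beta> by (intro mult_left_mono) auto
    then show ?thesis using z(3) by simp
  next
    case 3
    have "x powr \<beta> = x * x powr (\<beta> - 1)" using powr_mult_base[of x "\<beta> - 1"] 3 by simp
    also have "\<dots> \<le> x * \<beta> * x powr (\<beta> - 1)" using 3 \<beta> by (simp add: mult_left_mono)
    finally show ?thesis using 3 by simp
  qed simp
qed

text \<open>A non-root vertex v is visited by the contour during an excursion of length 2|t_v| above
  the edge to its parent; its contribution lies between (2|t_v| - 2)^\<beta> and (2|t_v|)^\<beta>.\<close>

fun lower_sum :: "real \<Rightarrow> tree \<Rightarrow> real" where
  "lower_sum \<beta> (Node ts) = (\<Sum>s\<leftarrow>ts. (2 * real (tsize s) - 2) powr \<beta> + lower_sum \<beta> s)"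

fun upper_sum :: "real \<Rightarrow> tree \<Rightarrow> real" where
  "upper_sum \<beta> (Node ts) = (\<Sum>s\<leftarrow>ts. (2 * real (tsize s)) powr \<beta> + upper_sum \<beta> s)"

lemma contour_Cons_first_return: "contour (Node (s # ts)) (2 * real (tsize s)) = 0"
  using contour_Cons_right[of s "2 * real (tsize s)" ts] contour_zero[of "Node ts"] by simp

lemma Z_on_contour_Cons:
  fixes s :: tree and ts :: "tree list"
  assumes \<beta>: "\<beta> \<ge> 1"
  defines "N \<equiv> real (tsize s)" and "m \<equiv> real (tsize (Node ts))"
  shows "Z_on \<beta> (contour (Node (s # ts))) 0 (2 * (N + m) - 2)
       = Z_on \<beta> (contour (Node (s # ts))) 0 (2 * N) + Z_on \<beta> (contour (Node ts)) 0 (2 * m - 2)"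
proof -
  let ?C = "contour (Node (s # ts))" and ?Ct = "contour (Node ts)"
  have m: "m \<ge> 1" unfolding m_def using tsize_pos[of "Node ts"] by linarith
  have cont: "continuous_on S (contour t)" for S t using continuous_on_contour continuous_on_subset by blast
  have "Z_on \<beta> ?C 0 (2 * (N + m) - 2) = Z_on \<beta> ?C 0 (2 * N) + Z_on \<beta> ?C (2 * N) (2 * (N + m) - 2)"
    by (rule Z_on_split_at_zero[OF cont _ _ _ _ \<beta>])
       (use m contour_Cons_first_return[of s ts] in \<open>auto simp: N_def contour_nonneg\<close>)
  also have "Z_on \<beta> ?C (2 * N) (2 * (N + m) - 2)
      = Z_on \<beta> (\<lambda>x. 1 * ?Ct ((x - 2 * N) / 1)) (2 * N) (2 * (N + m) - 2)"
    by (rule Z_on_cong) (use m contour_Cons_right[of s _ ts] in \<open>auto simp: N_def\<close>)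
  also have "\<dots> = Z_on \<beta> (\<lambda>x. 1 * ?Ct ((x - 2 * N) / 1)) (1 * 0 + 2 * N) (1 * (2 * m - 2) + 2 * N)"
    by (simp add: algebra_simps)
  also have "\<dots> = 1 * (1 * rpow 1 (\<beta> - 1)) * Z_on \<beta> ?Ct 0 (2 * m - 2)"
    by (rule Z_on_affine[OF cont]) (use m in auto)
  finally show ?thesis by (simp add: rpow_def)
qed

lemma Z_on_contour_first_subtree:
  fixes s :: tree and ts :: "tree list"
  assumes \<beta>: "\<beta> \<ge> 1"
  defines "N \<equiv> real (tsize s)"
  shows "Z_on \<beta> (contour s) 0 (2 * N - 2) + (2 * N - 2) powr \<beta> \<le> Z_on \<beta> (contour (Node (s # ts))) 0 (2 * N)"
    "Z_on \<beta> (contour (Node (s # ts))) 0 (2 * N) \<le> Z_on \<beta> (contour s) 0 (2 * N - 2) + (2 * N) powr \<beta>"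
proof -
  define K where "K = 2 * N - 2"
  have K: "K \<ge> 0" unfolding K_def N_def using tsize_pos[of s] by simp
  have cont: "continuous_on S (contour t)" for S t using continuous_on_contour continuous_on_subset by blast
  have "\<And>x. x \<in> {0..1} \<Longrightarrow> contour (Node (s # ts)) x = x"
    "\<And>x. x \<in> {1..K+1} \<Longrightarrow> contour (Node (s # ts)) x = 1 + contour s (x - 1)"
    "\<And>x. x \<in> {K+1..K+2} \<Longrightarrow> contour (Node (s # ts)) x = K + 2 - x"
    using contour_Cons_left contour_Cons_mid contour_Cons_edge unfolding K_def N_def
    by (auto simp: algebra_simps)
  note bounds = Z_on_excursion_bounds[OF K \<beta> cont _ cont this]
  have "Z_on \<beta> (contour s) 0 K + K powr \<beta> \<le> Z_on \<beta> (contour (Node (s # ts))) 0 (K + 2)"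
    using bounds(1) contour_nonneg mult_rpow_eq_powr[OF K, of \<beta>] by simp
  then show "Z_on \<beta> (contour s) 0 (2 * N - 2) + (2 * N - 2) powr \<beta> \<le> Z_on \<beta> (contour (Node (s # ts))) 0 (2 * N)"
    unfolding K_def by simp
  have "0 \<le> K + 2" using K by simp
  then have "Z_on \<beta> (contour (Node (s # ts))) 0 (K + 2) \<le> Z_on \<beta> (contour s) 0 K + (K + 2) powr \<beta>"
    using bounds(2) contour_nonneg mult_rpow_eq_powr[of "K + 2" \<beta>] by simp
  then show "Z_on \<beta> (contour (Node (s # ts))) 0 (2 * N) \<le> Z_on \<beta> (contour s) 0 (2 * N - 2) + (2 * N) powr \<beta>"
    unfolding K_def by simp
qed

lemma Z_on_contour_bounds:
  assumes \<beta>: "\<beta> \<ge> 1"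
  shows "lower_sum \<beta> t \<le> Z_on \<beta> (contour t) 0 (2 * real (tsize t) - 2) \<and>
         Z_on \<beta> (contour t) 0 (2 * real (tsize t) - 2) \<le> upper_sum \<beta> t"
proof (induction t)
  case (Node ts)
  then show ?case
  proof (induction ts)
    case Nil
    then show ?case by (simp add: Z_on_def)
  next
    case (Cons s ts)
    have size: "2 * real (tsize (Node (s # ts))) - 2 = 2 * (real (tsize s) + real (tsize (Node ts))) - 2"
      by simp
    show ?case
      using Cons Z_on_contour_Cons[OF \<beta>, of s ts] Z_on_contour_first_subtree[OF \<beta>, of s ts]
      unfolding size by fastforce
  qed
qed

lemma upper_sum_eq: "upper_sum \<beta> t = 2 powr \<beta> * (subtree_pow_sum \<beta> t - real (tsize t) powr \<beta>)"
proof (induction t)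
  case (Node ts)
  have "upper_sum \<beta> (Node ts) = (\<Sum>s\<leftarrow>ts. 2 powr \<beta> * subtree_pow_sum \<beta> s)"
  proof (simp, rule arg_cong[where f=sum_list], rule map_cong[OF refl])
    fix s assume s: "s \<in> set ts"
    then show "(2 * real (tsize s)) powr \<beta> + upper_sum \<beta> s = 2 powr \<beta> * subtree_pow_sum \<beta> s"
      using Node[OF s] by (simp add: powr_mult algebra_simps)
  qed
  then show ?case by (simp add: sum_list_const_mult)
qed

lemma upper_minus_lower_sum:
  assumes \<beta>: "\<beta> \<ge> 1"
  shows "upper_sum \<beta> t - lower_sum \<beta> t \<le> (real (tsize t) - 1) * (2 * \<beta> * (2 * real (tsize t)) powr (\<beta> - 1))"
proof (induction t)
  case (Node ts)
  define w where "w m = 2 * \<beta> * (2 * real m) powr (\<beta> - 1)" for m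
  let ?n = "tsize (Node ts)"
  have "upper_sum \<beta> (Node ts) - lower_sum \<beta> (Node ts)
      = (\<Sum>s\<leftarrow>ts. ((2 * real (tsize s)) powr \<beta> - (2 * real (tsize s) - 2) powr \<beta>)
                   + (upper_sum \<beta> s - lower_sum \<beta> s))"
    by (simp add: sum_list_subtractf[symmetric] algebra_simps)
  also have "\<dots> \<le> (\<Sum>s\<leftarrow>ts. real (tsize s) * w ?n)"
  proof (rule sum_list_mono)
    fix s assume s: "s \<in> set ts"
    have "tsize s \<le> ?n" using s member_le_sum_list[of "tsize s" "map tsize ts"] by simp
    then have mono: "w (tsize s) \<le> w ?n" unfolding w_def using \<beta> by (intro mult_left_mono powr_mono2) auto
    have "(2 * real (tsize s)) powr \<beta> - (2 * real (tsize s) - 2) powr \<beta> \<le> w (tsize s)"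
      unfolding w_def using powr_diff_le[OF \<beta>, of 2 "2 * real (tsize s)"] tsize_pos[of s] by simp
    then have "((2 * real (tsize s)) powr \<beta> - (2 * real (tsize s) - 2) powr \<beta>) + (upper_sum \<beta> s - lower_sum \<beta> s)
        \<le> real (tsize s) * w (tsize s)"
      using Node[OF s] unfolding w_def by (simp add: algebra_simps)
    also have "\<dots> \<le> real (tsize s) * w ?n" using mono by (intro mult_left_mono) auto
    finally show "((2 * real (tsize s)) powr \<beta> - (2 * real (tsize s) - 2) powr \<beta>) + (upper_sum \<beta> s - lower_sum \<beta> s)
        \<le> real (tsize s) * w ?n" .
  qed
  also have "\<dots> = (real ?n - 1) * w ?n"
    by (simp add: sum_list_mult_const sum_list_of_nat[symmetric] comp_def)
  finally show ?case unfolding w_def .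
qed

lemma Z_on_contour_tail:
  assumes "\<beta> \<ge> 1"
  shows "Z_on \<beta> (contour t) 0 (2 * real (tsize t)) = Z_on \<beta> (contour t) 0 (2 * real (tsize t) - 2)"
proof -
  have cc: "continuous_on S (contour t)" for S using continuous_on_contour continuous_on_subset by blast
  have "Z_on \<beta> (contour t) 0 (2 * real (tsize t)) = Z_on \<beta> (contour t) 0 (2 * real (tsize t) - 2) + Z_on \<beta> (contour t) (2 * real (tsize t) - 2) (2 * real (tsize t))"
    by (rule Z_on_split_at_zero[OF cc]) (use assms tsize_pos[of t] in \<open>auto simp: contour_nonneg contour_tail\<close>)
  moreover have "Z_on \<beta> (contour t) (2 * real (tsize t) - 2) (2 * real (tsize t)) = 0"
    by (rule Z_on_zero) (auto simp: contour_tail)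
  ultimately show ?thesis by simp
qed

lemma Z_fun_rescaled_contour:
  fixes t :: tree
  assumes \<beta>: "\<beta> \<ge> 1" and a: "a > 0"
  defines "n \<equiv> real (tsize t)"
  shows "Z_fun \<beta> (apply_bcontfun (rescaled_contour a t))
       = a / n * Z_on \<beta> (contour t) 0 (2 * n - 2) / (2 * n) powr \<beta>"
proof -
  have n: "n \<ge> 1" unfolding n_def using tsize_pos[of t] by simp
  define L where "L = 1 / (2 * n)"
  have L: "L > 0" unfolding L_def using n by simp
  have cc: "continuous_on {0..2 * n} (contour t)" using continuous_on_contour continuous_on_subset by blast
  have e0: "L * 0 + 0 = 0" and e1: "L * (2 * n) + 0 = 1" unfolding L_def using n by auto
  have "Z_fun \<beta> (apply_bcontfun (rescaled_contour a t)) = Z_on \<beta> (\<lambda>s. a / n * contour t (2 * n * clamp01 s)) 0 1"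
    unfolding Z_fun_eq_Z_on apply_rescaled_contour n_def ..
  also have "\<dots> = Z_on \<beta> (\<lambda>x. (a / n) * contour t ((x - 0) / L)) (L * 0 + 0) (L * (2 * n) + 0)"
    unfolding e0 e1 by (rule Z_on_cong) (auto simp: clamp01_id L_def mult.commute)
  also have "\<dots> = L * ((a / n) * rpow L (\<beta> - 1)) * Z_on \<beta> (contour t) 0 (2 * n)"
    by (rule Z_on_affine[OF cc L]) (use a n in auto)
  also have "L * ((a / n) * rpow L (\<beta> - 1)) = a / n * L powr \<beta>"
    using mult_rpow_eq_powr[of L \<beta>] L by simp
  also have "L powr \<beta> = 1 / (2 * n) powr \<beta>" unfolding L_def using n by (simp add: powr_divide)
  also have "Z_on \<beta> (contour t) 0 (2 * n) = Z_on \<beta> (contour t) 0 (2 * n - 2)"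
    unfolding n_def by (rule Z_on_contour_tail[OF \<beta>])
  finally show ?thesis by simp
qed

lemma subtree_pow_sum_vs_Z_on_contour:
  fixes t :: tree
  assumes \<beta>: "\<beta> \<ge> 1"
  defines "n \<equiv> real (tsize t)" and "J \<equiv> Z_on \<beta> (contour t) 0 (2 * real (tsize t) - 2)"
  shows "(2 * n) powr \<beta> \<le> 2 powr \<beta> * subtree_pow_sum \<beta> t - J"
    "2 powr \<beta> * subtree_pow_sum \<beta> t - J \<le> (1 + \<beta>) * (2 * n) powr \<beta>"
proof -
  have n: "n \<ge> 1" unfolding n_def using tsize_pos[of t] by simp
  have sum: "2 powr \<beta> * subtree_pow_sum \<beta> t = upper_sum \<beta> t + (2 * n) powr \<beta>"
    using upper_sum_eq[of \<beta> t] unfolding n_def by (simp add: powr_mult algebra_simps)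
  have J: "lower_sum \<beta> t \<le> J" "J \<le> upper_sum \<beta> t"
    using Z_on_contour_bounds[OF \<beta>, of t] unfolding J_def by auto
  show "(2 * n) powr \<beta> \<le> 2 powr \<beta> * subtree_pow_sum \<beta> t - J" using sum J by simp
  have "(n - 1) * (2 * \<beta> * (2 * n) powr (\<beta> - 1)) = \<beta> * (2 * n) powr \<beta> * ((n - 1) / n)"
    using n by (simp add: powr_diff field_simps)
  also have "\<dots> \<le> \<beta> * (2 * n) powr \<beta>" by (rule mult_left_le) (use n \<beta> in auto)
  finally have "upper_sum \<beta> t - lower_sum \<beta> t \<le> \<beta> * (2 * n) powr \<beta>"
    using upper_minus_lower_sum[OF \<beta>, of t] unfolding n_def by linarith
  then show "2 powr \<beta> * subtree_pow_sum \<beta> t - J \<le> (1 + \<beta>) * (2 * n) powr \<beta>"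
    using sum J by (simp add: algebra_simps)
qed

lemma subtree_pow_sum_approx:
  fixes t :: tree
  assumes \<beta>: "\<beta> \<ge> 1" and a: "a > 0"
  defines "n \<equiv> real (tsize t)"
  shows "\<bar>a / n powr (\<beta> + 1) * subtree_pow_sum \<beta> t - Z_fun \<beta> (apply_bcontfun (rescaled_contour a t))\<bar>
         \<le> (1 + \<beta>) * a / n"
proof -
  have n: "n \<ge> 1" unfolding n_def using tsize_pos[of t] by simp
  define D where "D = 2 powr \<beta> * subtree_pow_sum \<beta> t - Z_on \<beta> (contour t) 0 (2 * n - 2)"
  define W where "W = (2 * n) powr \<beta>"
  have W: "W > 0" unfolding W_def using n by simp
  have D: "W \<le> D" "D \<le> (1 + \<beta>) * W"
    using subtree_pow_sum_vs_Z_on_contour[OF \<beta>, of t] unfolding D_def W_def n_def by auto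
  have "a / n powr (\<beta> + 1) * subtree_pow_sum \<beta> t = a / n * (2 powr \<beta> * subtree_pow_sum \<beta> t) / W"
    using n unfolding W_def by (simp add: powr_add powr_mult field_simps)
  then have diff: "a / n powr (\<beta> + 1) * subtree_pow_sum \<beta> t - Z_fun \<beta> (apply_bcontfun (rescaled_contour a t))
      = a / n * (D / W)"
    using W n unfolding Z_fun_rescaled_contour[OF \<beta> a, of t, folded n_def] D_def W_def
    by (simp add: field_simps)
  have q: "0 \<le> D / W" "D / W \<le> 1 + \<beta>" using D W by (auto simp: field_simps)
  have an: "0 \<le> a / n" using a n by simp
  have "0 \<le> a / n * (D / W)" by (rule mult_nonneg_nonneg[OF an q(1)])
  moreover have "a / n * (D / W) \<le> a / n * (1 + \<beta>)" by (rule mult_left_mono[OF q(2) an])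
  ultimately show ?thesis unfolding diff by (simp add: algebra_simps)
qed

section \<open>Convergence in distribution\<close>

lemma conv_distr_continuous_map:
  fixes F :: "'i filter" and p :: "'i \<Rightarrow> 'b::topological_space pmf" and Zf :: "'b \<Rightarrow> real"
    and g :: "real \<Rightarrow> real"
  assumes conv: "conv_distr F (\<lambda>n. measure_pmf (p n)) H"
    and H: "sets H = sets borel" and Zc: "continuous_on UNIV Zf"
    and gc: "continuous_on UNIV g" and gb: "bounded (range g)"
  shows "((\<lambda>n. \<integral>t. g (Zf t) \<partial>measure_pmf (p n)) \<longlongrightarrow> (\<integral>x. g x \<partial>distr H borel Zf)) F"
proof -
  have Zm: "Zf \<in> measurable H borel"
    by (subst measurable_cong_sets[OF H refl]) (rule borel_measurable_continuous_onI[OF Zc])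
  have gm: "g \<in> borel_measurable borel" by (rule borel_measurable_continuous_onI[OF gc])
  have c: "continuous_on UNIV (\<lambda>x. g (Zf x))"
    using continuous_on_compose[OF Zc continuous_on_subset[OF gc]] by (simp add: comp_def)
  have b: "bounded (range (\<lambda>x. g (Zf x)))"
    by (rule bounded_subset[OF gb]) auto
  have "((\<lambda>n. \<integral>t. g (Zf t) \<partial>measure_pmf (p n)) \<longlongrightarrow> (\<integral>x. g (Zf x) \<partial>H)) F"
    using conv[unfolded conv_distr_def, rule_format, OF conjI[OF c b]] .
  also have "(\<integral>x. g (Zf x) \<partial>H) = (\<integral>x. g x \<partial>distr H borel Zf)"
    by (rule integral_distr[OF Zm gm, symmetric])
  finally show ?thesis .
qed

definition tail_cutoff :: "nat \<Rightarrow> real \<Rightarrow> real" where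
  "tail_cutoff k x = min 1 (max 0 (\<bar>x\<bar> - real k))"

lemma tail_cutoff_continuous: "continuous_on UNIV (tail_cutoff k)"
  unfolding tail_cutoff_def by (intro continuous_intros)

lemma tail_cutoff_bounds: "0 \<le> tail_cutoff k x" "tail_cutoff k x \<le> 1"
  unfolding tail_cutoff_def by auto

lemma tail_cutoff_bounded: "bounded (range (tail_cutoff k))"
  unfolding bounded_iff using tail_cutoff_bounds by (intro exI[of _ 1]) auto

lemma tail_cutoff_small:
  fixes N :: "real measure"
  assumes "prob_space N" "sets N = sets borel" "e > 0"
  shows "\<exists>k. (\<integral>x. tail_cutoff k x \<partial>N) < e"
proof -
  interpret N: prob_space N by (rule assms(1))
  have meas: "tail_cutoff k \<in> borel_measurable N" for k
    by (subst measurable_cong_sets[OF assms(2) refl]) (rule borel_measurable_continuous_onI[OF tail_cutoff_continuous])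
  have "(\<lambda>k. \<integral>x. tail_cutoff k x \<partial>N) \<longlonglongrightarrow> (\<integral>x. 0 \<partial>N)"
  proof (rule integral_dominated_convergence[where w="\<lambda>_. 1"])
    show "(\<lambda>x. 0::real) \<in> borel_measurable N" by simp
    show "tail_cutoff k \<in> borel_measurable N" for k by (rule meas)
    show "integrable N (\<lambda>_. 1::real)" by simp
    show "AE x in N. (\<lambda>k. tail_cutoff k x) \<longlonglongrightarrow> 0"
    proof (rule AE_I2)
      fix x :: real
      have "eventually (\<lambda>k. tail_cutoff k x = 0) sequentially"
      proof -
        obtain k0 :: nat where "\<bar>x\<bar> \<le> real k0" using real_arch_simple by blast
        then show ?thesis unfolding tail_cutoff_def
          by (intro eventually_sequentiallyI[of k0]) auto
      qed
      then show "(\<lambda>k. tail_cutoff k x) \<longlonglongrightarrow> 0" by (rule tendsto_eventually)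
    qed
    show "AE x in N. norm (tail_cutoff k x) \<le> 1" for k using tail_cutoff_bounds by auto
  qed
  then have "(\<lambda>k. \<integral>x. tail_cutoff k x \<partial>N) \<longlonglongrightarrow> 0" by simp
  then have "eventually (\<lambda>k. (\<integral>x. tail_cutoff k x \<partial>N) < e) sequentially"
    using assms(3) by (rule order_tendstoD)
  then obtain N0 where "\<And>n. n \<ge> N0 \<Longrightarrow> (\<integral>x. tail_cutoff n x \<partial>N) < e"
    unfolding eventually_sequentially by blast
  then show ?thesis by blast
qed

lemma uniformly_continuous_up_to_tail:
  fixes f :: "real \<Rightarrow> real"
  assumes fc: "continuous_on UNIV f" and B: "\<And>x. \<bar>f x\<bar> \<le> B" and \<epsilon>: "\<epsilon> > 0"
  obtains \<eta> where "\<eta> > 0" "\<And>x y. \<bar>x - y\<bar> < \<eta> \<Longrightarrow> \<bar>f x - f y\<bar> \<le> \<epsilon> + 2 * B * tail_cutoff k y"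
proof -
  have "uniformly_continuous_on {- (real k + 2)..real k + 2} f"
    by (rule compact_uniformly_continuous[OF continuous_on_subset[OF fc]]) auto
  then obtain \<eta> where \<eta>: "\<eta> > 0" "\<And>x y. x \<in> {- (real k + 2)..real k + 2} \<Longrightarrow> y \<in> {- (real k + 2)..real k + 2} \<Longrightarrow>
      dist x y < \<eta> \<Longrightarrow> dist (f x) (f y) < \<epsilon>"
    using \<epsilon> unfolding uniformly_continuous_on_def by metis
  have B0: "0 \<le> B" using B[of 0] by simp
  show ?thesis
  proof (rule that[of "min \<eta> 1"])
    fix x y assume xy: "\<bar>x - y\<bar> < min \<eta> 1"
    show "\<bar>f x - f y\<bar> \<le> \<epsilon> + 2 * B * tail_cutoff k y"
    proof (cases "\<bar>y\<bar> \<le> real k + 1")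
      case True
      then have "dist (f x) (f y) < \<epsilon>" using xy by (intro \<eta>(2)) (auto simp: dist_real_def)
      moreover have "0 \<le> 2 * B * tail_cutoff k y" using tail_cutoff_bounds[of k y] B0 by simp
      ultimately show ?thesis by (simp add: dist_real_def)
    next
      case False
      then have "tail_cutoff k y = 1" unfolding tail_cutoff_def by auto
      then show ?thesis using B[of x] B[of y] \<epsilon> by simp
    qed
  qed (use \<eta> in simp)
qed

lemma integral_pmf_abs_diff_le:
  fixes u v w :: "'a \<Rightarrow> real"
  assumes bnd: "\<And>t. \<bar>u t\<bar> \<le> B" "\<And>t. \<bar>v t\<bar> \<le> B" "\<And>t. \<bar>w t\<bar> \<le> B"
    and pw: "\<And>t. t \<in> set_pmf q \<Longrightarrow> \<bar>u t - v t\<bar> \<le> \<epsilon> + C * w t"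
  shows "\<bar>(\<integral>t. u t \<partial>q) - (\<integral>t. v t \<partial>q)\<bar> \<le> \<epsilon> + C * (\<integral>t. w t \<partial>q)"
proof -
  have int: "integrable (measure_pmf q) u" "integrable (measure_pmf q) v" "integrable (measure_pmf q) w"
    using bnd by (auto intro: measure_pmf.integrable_const_bound[where B=B])
  have "\<bar>(\<integral>t. u t \<partial>q) - (\<integral>t. v t \<partial>q)\<bar> = \<bar>\<integral>t. u t - v t \<partial>q\<bar>"
    using int by simp
  also have "\<dots> \<le> (\<integral>t. \<bar>u t - v t\<bar> \<partial>q)"
    by (rule integral_abs_bound)
  also have "\<dots> \<le> (\<integral>t. \<epsilon> + C * w t \<partial>q)"
    by (rule integral_mono_AE) (use int pw in \<open>auto simp: AE_measure_pmf_iff\<close>)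
  also have "\<dots> = \<epsilon> + C * (\<integral>t. w t \<partial>q)"
    using int by (simp add: measure_pmf.prob_space)
  finally show ?thesis .
qed

lemma conv_distr_uniform_approx:
  fixes F :: "'i filter" and R :: "'i \<Rightarrow> 'a \<Rightarrow> 'b::topological_space" and Zf :: "'b \<Rightarrow> real"
    and Y :: "'i \<Rightarrow> 'a \<Rightarrow> real" and p :: "'i \<Rightarrow> 'a pmf" and H :: "'b measure" and \<delta> :: "'i \<Rightarrow> real"
  assumes conv: "conv_distr F (\<lambda>n. measure_pmf (map_pmf (R n) (p n))) H"
    and Hp: "prob_space H" and Hs: "sets H = sets borel" and Zc: "continuous_on UNIV Zf"
    and close: "eventually (\<lambda>n. \<forall>t\<in>set_pmf (p n). \<bar>Y n t - Zf (R n t)\<bar> \<le> \<delta> n) F"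
    and del: "(\<delta> \<longlongrightarrow> 0) F"
  shows "conv_distr F (\<lambda>n. measure_pmf (map_pmf (Y n) (p n))) (distr H borel Zf)"
  unfolding conv_distr_def
proof (intro allI impI, elim conjE)
  fix f :: "real \<Rightarrow> real" assume fc: "continuous_on UNIV f" and fb: "bounded (range f)"
  obtain B where B: "\<And>x. \<bar>f x\<bar> \<le> B" using fb unfolding bounded_iff by auto
  have B0: "0 \<le> B" using B[of 0] by simp
  let ?N = "distr H borel Zf"
  have Zm: "Zf \<in> measurable H borel"
    by (subst measurable_cong_sets[OF Hs refl]) (rule borel_measurable_continuous_onI[OF Zc])
  have Np: "prob_space ?N" by (rule prob_space.prob_space_distr[OF Hp Zm])
  have lim: "((\<lambda>n. \<integral>t. g (Zf (R n t)) \<partial>measure_pmf (p n)) \<longlongrightarrow> (\<integral>x. g x \<partial>?N)) F"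
    if "continuous_on UNIV g" "bounded (range g)" for g :: "real \<Rightarrow> real"
    using conv_distr_continuous_map[OF conv Hs Zc that] by (simp add: integral_map_pmf)
  show "((\<lambda>n. \<integral>x. f x \<partial>measure_pmf (map_pmf (Y n) (p n))) \<longlongrightarrow> (\<integral>x. f x \<partial>?N)) F"
    unfolding tendsto_iff
  proof (intro allI impI)
    fix e :: real assume e: "e > 0"
    define \<epsilon> where "\<epsilon> = e / (2 * B + 3)"
    have \<epsilon>: "\<epsilon> > 0" and "\<epsilon> * (2 * B + 3) = e" unfolding \<epsilon>_def using e B0 by auto
    then have e_gt: "\<epsilon> + 2 * B * \<epsilon> + \<epsilon> < e" by (simp add: algebra_simps)
    obtain k where k: "(\<integral>x. tail_cutoff k x \<partial>?N) < \<epsilon>" using tail_cutoff_small[OF Np _ \<epsilon>] by auto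
    obtain \<eta> where \<eta>: "\<eta> > 0" "\<And>x y. \<bar>x - y\<bar> < \<eta> \<Longrightarrow> \<bar>f x - f y\<bar> \<le> \<epsilon> + 2 * B * tail_cutoff k y"
      using uniformly_continuous_up_to_tail[OF fc B \<epsilon>] by blast
    have fB: "\<bar>f x\<bar> \<le> B + 1" and cB: "\<bar>tail_cutoff k x\<bar> \<le> B + 1" for x
      using B[of x] tail_cutoff_bounds[of k x] B0 by auto
    have "eventually (\<lambda>n. \<delta> n < \<eta>) F" using del \<eta>(1) by (rule order_tendstoD)
    moreover have "eventually (\<lambda>n. dist (\<integral>t. f (Zf (R n t)) \<partial>measure_pmf (p n)) (\<integral>x. f x \<partial>?N) < \<epsilon>) F"
      using lim[OF fc fb] \<epsilon> unfolding tendsto_iff by blast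
    moreover have "eventually (\<lambda>n. (\<integral>t. tail_cutoff k (Zf (R n t)) \<partial>measure_pmf (p n)) < \<epsilon>) F"
      using lim[OF tail_cutoff_continuous tail_cutoff_bounded] k by (rule order_tendstoD)
    ultimately show "eventually (\<lambda>n. dist (\<integral>x. f x \<partial>measure_pmf (map_pmf (Y n) (p n))) (\<integral>x. f x \<partial>?N) < e) F"
      using close
    proof eventually_elim
      case (elim n)
      have "\<bar>f (Y n t) - f (Zf (R n t))\<bar> \<le> \<epsilon> + 2 * B * tail_cutoff k (Zf (R n t))"
        if "t \<in> set_pmf (p n)" for t
        using elim(1,4) that by (intro \<eta>(2)) fastforce
      then have "\<bar>(\<integral>t. f (Y n t) \<partial>p n) - (\<integral>t. f (Zf (R n t)) \<partial>p n)\<bar> \<le> \<epsilon> + 2 * B * (\<integral>t. tail_cutoff k (Zf (R n t)) \<partial>p n)"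
        by (rule integral_pmf_abs_diff_le[OF fB fB cB])
      also have "\<dots> \<le> \<epsilon> + 2 * B * \<epsilon>"
        using elim(3) B0 by (intro add_left_mono mult_left_mono) auto
      finally show ?case
        using elim(2) e_gt by (simp add: integral_map_pmf dist_real_def)
    qed
  qed
qed

lemma tendsto_frequently_zero:
  fixes x :: "'i \<Rightarrow> real"
  assumes "(x \<longlongrightarrow> L) F" "frequently (\<lambda>n. x n = 0) F"
  shows "L = 0"
proof (rule ccontr)
  assume L: "L \<noteq> 0"
  have "eventually (\<lambda>n. dist (x n) L < \<bar>L\<bar>) F"
    using assms(1) L unfolding tendsto_iff by simp
  then have "frequently (\<lambda>n. dist (x n) L < \<bar>L\<bar> \<and> x n = 0) F"
    by (rule frequently_eventually_conj[OF assms(2)])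
  then have "frequently (\<lambda>n. False) F"
    by (rule frequently_elim1) (auto simp: dist_real_def)
  then show False by simp
qed

lemma conv_distr_AE_lower_bound:
  fixes M :: "'i \<Rightarrow> real measure" and X :: "real measure"
  assumes conv: "conv_distr F M X" and X: "prob_space X" "sets X = sets borel"
    and fr: "frequently (\<lambda>n. AE x in M n. c \<le> x) F"
  shows "AE x in X. c \<le> x"
proof -
  interpret X: prob_space X by (rule X(1))
  define f where "f x = min 1 (max 0 (c - x))" for x :: real
  have fc: "continuous_on UNIV f" unfolding f_def by (intro continuous_intros)
  have fb: "bounded (range f)" unfolding f_def bounded_iff by (intro exI[of _ 1]) auto
  have "frequently (\<lambda>n. (\<integral>x. f x \<partial>M n) = 0) F"
    using fr by (rule frequently_elim1) (auto intro!: integral_eq_zero_AE elim: eventually_mono simp: f_def)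
  then have int0: "(\<integral>x. f x \<partial>X) = 0"
    using tendsto_frequently_zero conv[unfolded conv_distr_def, rule_format, OF conjI[OF fc fb]] by blast
  have fmeas: "f \<in> borel_measurable X"
    by (subst measurable_cong_sets[OF X(2) refl]) (rule borel_measurable_continuous_onI[OF fc])
  have "integrable X f"
    by (rule X.integrable_const_bound[where B=1]) (use fmeas in \<open>auto simp: f_def\<close>)
  from integral_nonneg_eq_0_iff_AE[OF this] int0 have "AE x in X. f x = 0"
    by (simp add: f_def)
  then show ?thesis by (rule eventually_mono) (auto simp: f_def)
qed

lemma laplace_le_of_AE_ge:
  fixes X :: "real measure"
  assumes "prob_space X" "AE x in X. c \<le> x" "integrable X (\<lambda>x. exp (- l * x))" "l \<ge> 0"
  shows "(\<integral>x. exp (- l * x) \<partial>X) \<le> exp (- l * c)"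
proof -
  interpret X: prob_space X by (rule assms(1))
  have "(\<integral>x. exp (- l * x) \<partial>X) \<le> (\<integral>x. exp (- l * c) \<partial>X)"
    using assms(2) by (intro integral_mono_AE assms(3)) (auto elim!: eventually_mono intro: mult_left_mono assms(4))
  then show ?thesis by (simp add: X.prob_space)
qed

lemma powr_not_linearly_bounded:
  fixes \<kappa> \<gamma> K :: real
  assumes "\<kappa> > 0" "\<gamma> > 1" "K \<ge> 0" "\<And>l. l \<ge> 0 \<Longrightarrow> \<kappa> * l powr \<gamma> \<le> l * K"
  shows False
proof -
  define c where "c = K / \<kappa> + 1"
  have c: "c \<ge> 1" unfolding c_def using assms by simp
  define l where "l = c powr (1 / (\<gamma> - 1))"
  have l: "l > 0" unfolding l_def using c by simp
  have "l powr (\<gamma> - 1) = c" unfolding l_def using c assms(2) by (simp add: powr_powr)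
  moreover have "l powr (\<gamma> - 1) * l powr 1 = l powr ((\<gamma> - 1) + 1)" by (rule powr_add[symmetric])
  then have "l powr \<gamma> = l powr (\<gamma> - 1) * l powr 1" by simp
  ultimately have "l powr \<gamma> = l * c" using l by simp
  with assms(4)[of l] l have "\<kappa> * (l * c) \<le> l * K" by simp
  then have "\<kappa> * c \<le> K" using l by (simp add: mult.left_commute)
  moreover have "\<kappa> * c = K + \<kappa>" unfolding c_def using assms(1) by (simp add: field_simps)
  ultimately show False using assms(1) by linarith
qed

lemma stable_scaling_sublinear:
  fixes p :: "nat \<Rightarrow> nat pmf" and a :: "nat \<Rightarrow> real" and X :: "real measure" and \<kappa> \<gamma> :: real
  assumes kappa: "\<kappa> > 0" and gamma: "1 < \<gamma>" and a_pos: "\<And>n. a n > 0"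
    and X: "prob_space X" "sets X = sets borel"
    and laplace: "\<And>l. l \<ge> 0 \<Longrightarrow> integrable X (\<lambda>x. exp (- l * x)) \<and> (\<integral>x. exp (- l * x) \<partial>X) = exp (\<kappa> * l powr \<gamma>)"
    and conv: "conv_distr sequentially (\<lambda>n. measure_pmf (map_pmf (\<lambda>s. (real s - real n) / a n) (p n))) X"
  shows "((\<lambda>n. a n / real n) \<longlongrightarrow> 0) sequentially"
proof (rule ccontr)
  assume "\<not> ((\<lambda>n. a n / real n) \<longlongrightarrow> 0) sequentially"
  then obtain e where e: "e > 0" "frequently (\<lambda>n. \<not> \<bar>a n / real n\<bar> < e) sequentially"
    unfolding tendsto_iff by (auto simp: not_eventually dist_real_def)
  define K where "K = 1 / e"
  have K: "K \<ge> 0" unfolding K_def using e by simp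
  have "frequently (\<lambda>n. AE x in measure_pmf (map_pmf (\<lambda>s. (real s - real n) / a n) (p n)). - K \<le> x) sequentially"
    using e(2)
  proof (rule frequently_elim1)
    fix n assume "\<not> \<bar>a n / real n\<bar> < e"
    then have ge: "e \<le> a n / real n" using a_pos[of n] by simp
    then have "n > 0" using e by (cases n) auto
    then have "real n / a n \<le> K" using ge e a_pos[of n] by (simp add: K_def field_simps)
    moreover have "- (real n / a n) \<le> (real s - real n) / a n" for s :: nat
      using a_pos[of n] by (simp add: divide_right_mono diff_divide_distrib)
    ultimately show "AE x in measure_pmf (map_pmf (\<lambda>s. (real s - real n) / a n) (p n)). - K \<le> x"
      unfolding AE_measure_pmf_iff by (metis (no_types, lifting) imageE neg_le_iff_le order_trans set_map_pmf)
  qed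
  then have ae: "AE x in X. - K \<le> x" by (rule conv_distr_AE_lower_bound[OF conv X])
  have "\<kappa> * l powr \<gamma> \<le> l * K" if l: "l \<ge> 0" for l
    using laplace_le_of_AE_ge[OF X(1) ae _ l] laplace[OF l] by simp
  then show False using powr_not_linearly_bounded[OF kappa gamma K] by blast
qed

section \<open>Conditioned Galton--Watson trees\<close>

lemma finite_trees_le: "finite {t. tsize t \<le> n}"
proof (induction n)
  case 0
  have "\<not> tsize t \<le> 0" for t using tsize_pos[of t] by linarith
  then have "{t. tsize t \<le> 0} = {}" by blast
  then show ?case by (simp only:) simp
next
  case (Suc n)
  have "{t. tsize t \<le> Suc n} \<subseteq> Node ` {ts. set ts \<subseteq> {t. tsize t \<le> n} \<and> length ts \<le> n}"
  proof
    fix t assume t: "t \<in> {t. tsize t \<le> Suc n}"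
    obtain ts where ts: "t = Node ts" by (cases t)
    have sum: "sum_list (map tsize ts) \<le> n" using t ts by simp
    have "tsize s \<le> n" if "s \<in> set ts" for s
      using member_le_sum_list[of "tsize s" "map tsize ts"] that sum by auto
    moreover have "length ts \<le> n"
    proof -
      have "length ts = sum_list (map (\<lambda>_. 1::nat) ts)" by (simp add: sum_list_triv)
      also have "\<dots> \<le> sum_list (map tsize ts)" by (rule sum_list_mono) (use tsize_pos in auto)
      finally show ?thesis using sum by simp
    qed
    ultimately show "t \<in> Node ` {ts. set ts \<subseteq> {t. tsize t \<le> n} \<and> length ts \<le> n}" using ts by auto
  qed
  moreover have "finite (Node ` {ts. set ts \<subseteq> {t. tsize t \<le> n} \<and> length ts \<le> n})"
    by (intro finite_imageI finite_lists_length_le Suc)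
  ultimately show ?case by (rule finite_subset)
qed

lemma finite_trees: "finite {t. tsize t = n}"
  by (rule finite_subset[OF _ finite_trees_le[of n]]) auto

lemma gw_weight_nonneg: "0 \<le> gw_weight P t"
proof (induction t)
  case (Node ts)
  have "0 \<le> prod_list (map (gw_weight P) ts)" by (rule prod_list_nonneg) (use Node in auto)
  then show ?case by simp
qed

lemma set_pmf_cond_gw:
  assumes "gw_size_prob P n > 0"
  shows "set_pmf (cond_gw P n) \<subseteq> {t. tsize t = n}"
proof -
  define f where "f t = (if tsize t = n then gw_weight P t / gw_size_prob P n else 0)" for t
  have nn: "0 \<le> f t" for t unfolding f_def using gw_weight_nonneg assms by simp
  have "(\<integral>\<^sup>+ t. ennreal (f t) \<partial>count_space UNIV) = (\<Sum>t\<in>{t. tsize t = n}. ennreal (f t))"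
    by (rule nn_integral_count_space'[OF finite_trees]) (auto simp: f_def)
  also have "\<dots> = ennreal (\<Sum>t\<in>{t. tsize t = n}. f t)" using nn by simp
  also have "(\<Sum>t\<in>{t. tsize t = n}. f t) = (\<Sum>t\<in>{t. tsize t = n}. gw_weight P t) / gw_size_prob P n"
    unfolding f_def by (simp add: sum_divide_distrib)
  also have "\<dots> = 1" using assms unfolding gw_size_prob_def by simp
  finally have one: "(\<integral>\<^sup>+ t. ennreal (f t) \<partial>count_space UNIV) = 1" by simp
  have "set_pmf (cond_gw P n) = {t. f t \<noteq> 0}"
    unfolding cond_gw_def f_def[symmetric] by (rule set_embed_pmf[OF nn one])
  then show ?thesis unfolding f_def by auto
qed

text \<open>The hypotheses on the mean of P, on P(0), P(1) and \<gamma> \<le> 2 are not used below: they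
  matter only through the assumed convergence of the contour process.\<close>

theorem corollary3p9:
  fixes P :: "nat pmf" and a :: "nat \<Rightarrow> real" and \<kappa> \<gamma> \<beta> :: real
    and H :: "(real \<Rightarrow>\<^sub>C real) measure"
  assumes mean: "integrable (measure_pmf P) real" "measure_pmf.expectation P real = 1"
    and p0: "pmf P 0 > 0" and p01: "pmf P 0 + pmf P 1 < 1"
    and kappa: "\<kappa> > 0" and gamma: "1 < \<gamma>" "\<gamma> \<le> 2"
    and a_pos: "\<forall>n. a n > 0"
    and stable: "\<exists>X::real measure. prob_space X \<and> sets X = sets borel \<and>
        (\<forall>l\<ge>0. integrable X (\<lambda>x. exp (- l * x)) \<and>
                 (\<integral>x. exp (- l * x) \<partial>X) = exp (\<kappa> * l powr \<gamma>)) \<and>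
        conv_distr sequentially
          (\<lambda>n. measure_pmf (map_pmf (\<lambda>s. (real s - real n) / a n) (iid_sum P n))) X"
    and H_law: "prob_space H" "sets H = sets borel"
    and contour_conv: "conv_distr (inf sequentially (principal {n. gw_size_prob P n > 0}))
          (\<lambda>n. measure_pmf (map_pmf (rescaled_contour (a n)) (cond_gw P n))) H"
    and beta: "\<beta> \<ge> 1"
  shows "conv_distr (inf sequentially (principal {n. gw_size_prob P n > 0}))
          (\<lambda>n. measure_pmf (map_pmf (\<lambda>t. a n / real n powr (\<beta> + 1) * subtree_pow_sum \<beta> t)
                                    (cond_gw P n)))
          (distr H borel (\<lambda>h. Z_fun \<beta> (apply_bcontfun h)))"
proof -
  let ?F = "inf sequentially (principal {n. gw_size_prob P n > 0})"
  obtain X :: "real measure" where X: "prob_space X" "sets X = sets borel"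
    and laplace: "\<And>l. l \<ge> 0 \<Longrightarrow> integrable X (\<lambda>x. exp (- l * x)) \<and> (\<integral>x. exp (- l * x) \<partial>X) = exp (\<kappa> * l powr \<gamma>)"
    and walk: "conv_distr sequentially (\<lambda>n. measure_pmf (map_pmf (\<lambda>s. (real s - real n) / a n) (iid_sum P n))) X"
    using stable by blast
  have "((\<lambda>n. a n / real n) \<longlongrightarrow> 0) sequentially"
    using stable_scaling_sublinear[OF kappa gamma(1) _ X laplace walk] a_pos by blast
  then have error_vanishes: "((\<lambda>n. (1 + \<beta>) * (a n / real n)) \<longlongrightarrow> 0) ?F"
    using tendsto_mult_right_zero tendsto_mono inf_le1 by blast
  have "eventually (\<lambda>n. \<forall>t\<in>set_pmf (cond_gw P n). tsize t = n) ?F"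
    unfolding eventually_inf_principal using set_pmf_cond_gw by (blast intro: always_eventually)
  then have close: "eventually (\<lambda>n. \<forall>t\<in>set_pmf (cond_gw P n).
      \<bar>a n / real n powr (\<beta> + 1) * subtree_pow_sum \<beta> t - Z_fun \<beta> (apply_bcontfun (rescaled_contour (a n) t))\<bar>
      \<le> (1 + \<beta>) * (a n / real n)) ?F"
    by (rule eventually_mono) (use subtree_pow_sum_approx[OF beta a_pos[rule_format]] in fastforce)
  show ?thesis
    by (rule conv_distr_uniform_approx[OF contour_conv H_law continuous_on_Z_fun[OF beta] close error_vanishes])
qed

end
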